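(* Let $C\subseteq[n]$, $A_C\subseteq C^2$ symmetric with no pair $(a,a)$, $B_C\subseteq([n]\setminus C)\times C$, $ComCh_C\subseteq([n]\setminus C)^2$ and $NoComCh_C\subseteq([n]\setminus C)^2$. Let $\tilde A_C\subseteq A_C$ contain exactly one of $(a,b),(b,a)$ for each $(a,b)\in A_C$, and $\tilde E_C=\tilde A_C\cup B_C$. Then there exists $E_C\subseteq[n]^2$ with the SCCR properties (below) and containing at most one of $(a,b),(b,a)$ for all $a,b\in[n]$ if and only if there exist a removable set $Y\subseteq\tilde E_C$ and a vertex $x$ of the polyhedron $\mathcal F(Y)\cap[-1,0]^{\tilde A_C\setminus Y}$ such that: (1) for all $(a,b,c)\in[n]^3$ with $c\in C$, $(a,b),(c,b)\in A_C\cup B_C$, $Y\cap\{(a,b),(b,a),(c,b),(b,c)\}=\emptyset$ and $(a,c)\notin A_C\cup B_C$: $w_{Y,(a,b,c)}^Tx<\max_{y\in\{-1,0\}^{\tilde A_C\setminus Y}}w_{Y,(a,b,c)}^Ty$; (2) for all $(a,c)\in Y$ there exists $b\in C$ with $(a,b),(c,b)\in A_C\cup B_C$ and $Y\cap\{(a,b),(b,a),(c,b),(b,c)\}=\emptyset$ such that $w_{Y,(a,b,c)}^Tx=\max_{y\in\{-1,0\}^{\tilde A_C\setminus Y}}w_{Y,(a,b,c)}^Ty$. Moreover, if such $Y$ and $x$ exist, then $\tilde E^{Y,J(x)}_C$ has the SCCR properties, where $J(x)=\{e\in\tilde A_C\setminus Y: x_e=-1\}$.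
   Context: A set $E_C\subseteq[n]^2$ has the SCCR properties (for the data $C,A_C,B_C,ComCh_C,NoComCh_C$) if, in the directed graph $G_C=([n],E_C)$: distinct $a,b$ are $p$-adjacent iff $(a,b)\in A_C\cup B_C$ or $(b,a)\in A_C\cup B_C$; $C$ is a strongly connected component of $G_C$ and there is no directed path from a vertex of $C$ to any vertex outside $C$; every $(a,b)\in ComCh_C$ has a common child in $C$; and no $(a,b)\in NoComCh_C$ has a common child in $C$. Here distinct $a,b$ are $p$-adjacent in a directed graph if there is an edge between them (either direction) or they have a common child that is an ancestor of $a$ or of $b$ ($u$ is an ancestor of $v$ if $u=v$ or there is a directed path from $u$ to $v$); strongly connected components are the classes of $i\sim j$ iff $i=j$ or there are directed paths $i\to j$ and $j\to i$. $Y\subseteq\tilde E_C$ is removable if: for every $(a,c)\in ComCh_C$ there is $b\in C$ with $(a,b),(c,b)\in B_C\setminus Y$; for every $(a,c)\in NoComCh_C$ there is no $b\in C$ with $(a,b),(c,b)\in B_C\setminus Y$; for every $(a,c)\in Y$ there is $b\in C$ with $(a,b),(c,b)\in A_C\cup B_C$ and $Y\cap\{(a,b),(b,a),(c,b),(b,c)\}=\emptyset$. For $E\subseteq[n]^2$, $U\subseteq[n]$: $\delta^-_E(U)=\{(a,b)\in E: a\notin U,b\in U\}$, $\delta^+_E(U)=\{(a,b)\in E: a\in U,b\notin U\}$, and $x(E')=\sum_{e\in E'}x_e$. $\mathcal F(Y)=\{x\in\mathbb R^{\tilde A_C\setminus Y}: x(\delta^-_{\tilde A_C\setminus Y}(U))-x(\delta^+_{\tilde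 A_C\setminus Y}(U))\le|\delta^+_{\tilde A_C\setminus Y}(U)|-1$ for all $U\in2^C\setminus\{\emptyset,C\}\}$. For $J\subseteq\tilde A_C\setminus Y$: $\tilde E^{Y,J}_C=(\{(b,a):(a,b)\in J\}\cup(\tilde A_C\setminus(Y\cup J)))\cup(B_C\setminus Y)$. For $(a,b,c)\in[n]^3$ with $c\in C$, $(a,b),(c,b)\in A_C\cup B_C$ and $Y\cap\{(a,b),(b,a),(c,b),(b,c)\}=\emptyset$, the weight vector $w_{Y,(a,b,c)}\in\mathbb R^{\tilde A_C\setminus Y}$ has entry $-1$ at $e=(b,a)$ or $e=(b,c)$, entry $1$ at $e=(a,b)$ or $e=(c,b)$, and $0$ elsewhere. *)

theory Defs
  imports Complex_Main
begin

type_synonym edge = "nat \<times> nat"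

definition ancestor :: "edge set \<Rightarrow> nat \<Rightarrow> nat \<Rightarrow> bool" where
  "ancestor E u v \<longleftrightarrow> (u, v) \<in> E\<^sup>*"

definition common_child :: "edge set \<Rightarrow> nat \<Rightarrow> nat \<Rightarrow> nat \<Rightarrow> bool" where
  "common_child E a b c \<longleftrightarrow> (a, c) \<in> E \<and> (b, c) \<in> E"

definition p_adjacent :: "edge set \<Rightarrow> nat \<Rightarrow> nat \<Rightarrow> bool" where
  "p_adjacent E a b \<longleftrightarrow> a \<noteq> b \<and>
     ((a, b) \<in> E \<or> (b, a) \<in> E \<or>
      (\<exists>c. common_child E a b c \<and> (ancestor E c a \<or> ancestor E c b)))"

definition is_SCC :: "nat \<Rightarrow> edge set \<Rightarrow> nat set \<Rightarrow> bool" where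
  "is_SCC n E C \<longleftrightarrow> (\<exists>i\<in>{1..n}. C = {j \<in> {1..n}. i = j \<or> ((i, j) \<in> E\<^sup>+ \<and> (j, i) \<in> E\<^sup>+)})"

definition SCCR :: "nat \<Rightarrow> nat set \<Rightarrow> edge set \<Rightarrow> edge set \<Rightarrow> edge set \<Rightarrow> edge set \<Rightarrow> edge set \<Rightarrow> bool" where
  "SCCR n C A B ComCh NoComCh E \<longleftrightarrow>
     (\<forall>a\<in>{1..n}. \<forall>b\<in>{1..n}. a \<noteq> b \<longrightarrow>
        (p_adjacent E a b \<longleftrightarrow> ((a, b) \<in> A \<union> B \<or> (b, a) \<in> A \<union> B))) \<and>
     is_SCC n E C \<and>
     (\<forall>i\<in>C. \<forall>j\<in>{1..n} - C. \<not> (i, j) \<in> E\<^sup>+) \<and>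
     (\<forall>(a, b)\<in>ComCh. \<exists>c\<in>C. common_child E a b c) \<and>
     (\<forall>(a, b)\<in>NoComCh. \<not> (\<exists>c\<in>C. common_child E a b c))"

definition removable :: "nat set \<Rightarrow> edge set \<Rightarrow> edge set \<Rightarrow> edge set \<Rightarrow> edge set \<Rightarrow> edge set \<Rightarrow> bool" where
  "removable C A B ComCh NoComCh Y \<longleftrightarrow>
     (\<forall>(a, c)\<in>ComCh. \<exists>b\<in>C. (a, b) \<in> B - Y \<and> (c, b) \<in> B - Y) \<and>
     (\<forall>(a, c)\<in>NoComCh. \<not> (\<exists>b\<in>C. (a, b) \<in> B - Y \<and> (c, b) \<in> B - Y)) \<and>
     (\<forall>(a, c)\<in>Y. \<exists>b\<in>C. (a, b) \<in> A \<union> B \<and> (c, b) \<in> A \<union> B \<and>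
         Y \<inter> {(a, b), (b, a), (c, b), (b, c)} = {})"

definition delta_in :: "edge set \<Rightarrow> nat set \<Rightarrow> edge set" where
  "delta_in E U = {(a, b) \<in> E. a \<notin> U \<and> b \<in> U}"

definition delta_out :: "edge set \<Rightarrow> nat set \<Rightarrow> edge set" where
  "delta_out E U = {(a, b) \<in> E. a \<in> U \<and> b \<notin> U}"

text \<open>Vectors in R^D (D a finite set of edges) are represented by functions
  edge => real vanishing outside D.\<close>
definition vecs_on :: "edge set \<Rightarrow> (edge \<Rightarrow> real) set" where
  "vecs_on D = {x. \<forall>e. e \<notin> D \<longrightarrow> x e = 0}"

definition xsum :: "(edge \<Rightarrow> real) \<Rightarrow> edge set \<Rightarrow> real" where
  "xsum x E' = (\<Sum>e\<in>E'. x e)"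

definition polyF_box :: "nat set \<Rightarrow> edge set \<Rightarrow> edge set \<Rightarrow> (edge \<Rightarrow> real) set" where
  "polyF_box C At Y =
     {x \<in> vecs_on (At - Y).
        (\<forall>U. U \<subseteq> C \<and> U \<noteq> {} \<and> U \<noteq> C \<longrightarrow>
           xsum x (delta_in (At - Y) U) - xsum x (delta_out (At - Y) U)
             \<le> real (card (delta_out (At - Y) U)) - 1) \<and>
        (\<forall>e\<in>At - Y. -1 \<le> x e \<and> x e \<le> 0)}"

definition is_vertex :: "(edge \<Rightarrow> real) set \<Rightarrow> (edge \<Rightarrow> real) \<Rightarrow> bool" where
  "is_vertex P x \<longleftrightarrow> x \<in> P \<and>
     \<not> (\<exists>y\<in>P. \<exists>z\<in>P. y \<noteq> z \<and> (\<exists>t::real. 0 < t \<and> t < 1 \<and>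
           x = (\<lambda>e. t * y e + (1 - t) * z e)))"

definition weight :: "nat \<Rightarrow> nat \<Rightarrow> nat \<Rightarrow> edge \<Rightarrow> real" where
  "weight a b c e =
     (if e = (b, a) \<or> e = (b, c) then -1 else if e = (a, b) \<or> e = (c, b) then 1 else 0)"

definition wdot :: "edge set \<Rightarrow> (edge \<Rightarrow> real) \<Rightarrow> (edge \<Rightarrow> real) \<Rightarrow> real" where
  "wdot D w x = (\<Sum>e\<in>D. w e * x e)"

definition pm_vecs :: "edge set \<Rightarrow> (edge \<Rightarrow> real) set" where
  "pm_vecs D = {y \<in> vecs_on D. \<forall>e\<in>D. y e \<in> {-1, 0}}"

definition wmax :: "edge set \<Rightarrow> (edge \<Rightarrow> real) \<Rightarrow> real" where
  "wmax D w = Max ((\<lambda>y. wdot D w y) ` pm_vecs D)"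

definition Etilde_YJ :: "edge set \<Rightarrow> edge set \<Rightarrow> edge set \<Rightarrow> edge set \<Rightarrow> edge set" where
  "Etilde_YJ At B Y J = ({(b, a). (a, b) \<in> J} \<union> (At - (Y \<union> J))) \<union> (B - Y)"

definition Jx :: "edge set \<Rightarrow> edge set \<Rightarrow> (edge \<Rightarrow> real) \<Rightarrow> edge set" where
  "Jx At Y x = {e \<in> At - Y. x e = -1}"

definition admissible :: "nat set \<Rightarrow> edge set \<Rightarrow> edge set \<Rightarrow> edge set \<Rightarrow> nat \<Rightarrow> nat \<Rightarrow> nat \<Rightarrow> bool" where
  "admissible C A B Y a b c \<longleftrightarrow> c \<in> C \<and> (a, b) \<in> A \<union> B \<and> (c, b) \<in> A \<union> B \<and>
      Y \<inter> {(a, b), (b, a), (c, b), (b, c)} = {}"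

end

theory Submission
  imports Defs "HOL-Library.FuncSet"
begin

text \<open>
  A point x of {-1, 0}^(At - Y) orients the pairs of At that are not removed: x e = -1 reverses e.
  In this encoding the cut inequalities of F(Y) say that every proper subset of C is left by an
  arc, i.e. that C is strongly connected, and w_{Y,(a,b,c)} attains its maximum exactly when b is a
  common child of a and c. Condition (1) thus rules out p-adjacencies not prescribed by A and B,
  and condition (2) restores the adjacency of every removed pair. Conversely, a graph E with the
  SCCR properties gives the certificate whose Y consists of the pairs E leaves unoriented.

  What remains is that the vertices of F(Y) in the box are integral. At a point with fractional
  edges, group the vertices of C by the tight cuts containing them. Uncrossing the tight cuts shows
  that every such class has integral leaving weight, so no class is crossed by exactly one
  fractional edge. Hence the fractional edges carry a nonzero circulation between the classes, and
  moving along it keeps every tight cut tight, so the point is the midpoint of two points of the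
  polytope.
\<close>

section \<open>Circulations on a quotient multigraph\<close>

definition crosses :: "('v \<Rightarrow> 'c) \<Rightarrow> 'c \<Rightarrow> 'v \<times> 'v \<Rightarrow> bool" where
  "crosses k c e \<longleftrightarrow> (k (fst e) = c) \<noteq> (k (snd e) = c)"

definition net_inflow :: "('v \<Rightarrow> 'c) \<Rightarrow> ('v \<times> 'v) set \<Rightarrow> ('v \<times> 'v \<Rightarrow> real) \<Rightarrow> 'c \<Rightarrow> real" where
  "net_inflow k F d c = (\<Sum>e\<in>F. d e * (of_bool (k (snd e) = c) - of_bool (k (fst e) = c)))"

definition nonzero_circulation :: "('v \<Rightarrow> 'c) \<Rightarrow> ('v \<times> 'v) set \<Rightarrow> ('v \<times> 'v \<Rightarrow> real) \<Rightarrow> bool" where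
  "nonzero_circulation k F d \<longleftrightarrow>
     (\<forall>e. e \<notin> F \<longrightarrow> d e = 0) \<and> (\<exists>e\<in>F. d e \<noteq> 0) \<and> (\<forall>c. net_inflow k F d c = 0)"

lemma net_inflow_support:
  assumes "finite F" "S \<subseteq> F" "\<forall>e\<in>F - S. d e = 0"
  shows "net_inflow k F d c = net_inflow k S d c"
  unfolding net_inflow_def using assms by (intro sum.mono_neutral_right) auto

lemma circulation_on_loop:
  assumes "finite F" "e \<in> F" "k (fst e) = k (snd e)"
  shows "\<exists>d. nonzero_circulation k F d"
proof -
  define d :: "_ \<Rightarrow> real" where "d e' = of_bool (e' = e)" for e'
  have "net_inflow k F d c = 0" for c
    using net_inflow_support[OF assms(1), of "{e}" d] assms by (simp add: d_def net_inflow_def)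
  then have "nonzero_circulation k F d"
    using assms(2) by (auto simp: nonzero_circulation_def d_def)
  then show ?thesis by blast
qed

lemma circulation_on_parallel_edges:
  assumes "finite F" "e \<in> F" "e' \<in> F" "e' \<noteq> e"
    and "(k (fst e') = k (fst e) \<and> k (snd e') = k (snd e)) \<or> (k (fst e') = k (snd e) \<and> k (snd e') = k (fst e))"
  shows "\<exists>d. nonzero_circulation k F d"
proof -
  define s :: real where "s = (if k (fst e') = k (fst e) then -1 else 1)"
  define d :: "_ \<Rightarrow> real" where "d x = (if x = e then 1 else if x = e' then s else 0)" for x
  have "net_inflow k F d c = 0" for c
  proof -
    have "net_inflow k F d c = net_inflow k {e, e'} d c"
      using assms(1-3) by (intro net_inflow_support) (auto simp: d_def)
    also have "\<dots> = (of_bool (k (snd e) = c) - of_bool (k (fst e) = c))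
        + s * (of_bool (k (snd e') = c) - of_bool (k (fst e') = c))"
      using assms(4) by (simp add: net_inflow_def d_def)
    also have "\<dots> = 0"
      using assms(5) by (auto simp: s_def)
    finally show ?thesis .
  qed
  moreover have "\<forall>x. x \<notin> F \<longrightarrow> d x = 0" "d e \<noteq> 0"
    using assms(2,3) by (auto simp: d_def)
  ultimately have "nonzero_circulation k F d"
    using assms(2) unfolding nonzero_circulation_def by blast
  then show ?thesis by blast
qed

lemma crossing_card_ge_2:
  assumes "finite F" "e \<in> F" "crosses k c e" "card {x\<in>F. crosses k c x} \<noteq> 1"
  shows "2 \<le> card {x\<in>F. crosses k c x}"
proof -
  have "{x\<in>F. crosses k c x} \<noteq> {}"
    using assms(2,3) by blast
  then have "card {x\<in>F. crosses k c x} \<noteq> 0"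
    using assms(1) by simp
  then show ?thesis using assms(4) by linarith
qed

lemma crossing_edge_not_alone:
  assumes "finite F" "e \<in> F" "crosses k c e" "card {x\<in>F. crosses k c x} \<noteq> 1"
  shows "F - {e} \<noteq> {}"
proof
  assume "F - {e} = {}"
  then have "{x\<in>F. crosses k c x} \<subseteq> {e}" by auto
  from card_mono[OF _ this] have "card {x\<in>F. crosses k c x} \<le> 1" by simp
  with crossing_card_ge_2[OF assms] show False by linarith
qed

text \<open>Without loops and parallel edges, the merged class is crossed by the edges crossing the
  class of a or of b, except (a, b) itself, hence by at least two edges.\<close>
lemma crossing_card_after_contraction:
  assumes fin: "finite F" and e: "e \<in> F" "e = (a, b)"
    and loopfree: "\<forall>x\<in>F. k (fst x) \<noteq> k (snd x)"
    and simple: "\<forall>x\<in>F - {e}. \<not> ((k (fst x) = k a \<and> k (snd x) = k b) \<or> (k (fst x) = k b \<and> k (snd x) = k a))"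
    and deg: "\<forall>c. card {x\<in>F. crosses k c x} \<noteq> 1"
  shows "card {x\<in>F - {e}. crosses (\<lambda>v. if k v = k b then k a else k v) c x} \<noteq> 1"
proof -
  let ?k' = "\<lambda>v. if k v = k b then k a else k v"
  have kab: "k a \<noteq> k b" using loopfree e by auto
  have cross_e: "crosses k (k a) e" "crosses k (k b) e" using e kab by (auto simp: crosses_def)
  consider "c = k a" | "c = k b" | "c \<noteq> k a" "c \<noteq> k b" by blast
  then show ?thesis
  proof cases
    case 1
    let ?Xa = "{x\<in>F. crosses k (k a) x} - {e}" and ?Xb = "{x\<in>F. crosses k (k b) x} - {e}"
    have "{x\<in>F - {e}. crosses ?k' c x} = ?Xa \<union> ?Xb"
      using 1 simple loopfree kab by (auto simp: crosses_def)
    moreover have "?Xa \<inter> ?Xb = {}"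
      using simple loopfree kab by (auto simp: crosses_def)
    ultimately have "card {x\<in>F - {e}. crosses ?k' c x} = card ?Xa + card ?Xb"
      using fin by (simp add: card_Un_disjoint)
    also have "\<dots> = (card {x\<in>F. crosses k (k a) x} - 1) + (card {x\<in>F. crosses k (k b) x} - 1)"
      using cross_e e fin by (simp add: card_Diff_singleton)
    moreover have "card {x\<in>F. crosses k (k a) x} \<noteq> 1" "card {x\<in>F. crosses k (k b) x} \<noteq> 1"
      using deg by auto
    ultimately show ?thesis
      using crossing_card_ge_2[OF fin e(1) cross_e(1)] crossing_card_ge_2[OF fin e(1) cross_e(2)]
      by linarith
  next
    case 2
    then have "{x\<in>F - {e}. crosses ?k' c x} = {}" using kab by (auto simp: crosses_def)
    then show ?thesis by (metis card.empty zero_neq_one)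
  next
    case 3
    then have "{x\<in>F - {e}. crosses ?k' c x} = {x\<in>F. crosses k c x}"
      using e by (auto simp: crosses_def)
    then show ?thesis using deg by simp
  qed
qed

lemma circulation_lift_contraction:
  assumes fin: "finite F" and e: "e \<in> F" "e = (a, b)" and kab: "k a \<noteq> k b"
    and circ: "nonzero_circulation (\<lambda>v. if k v = k b then k a else k v) (F - {e}) d"
  shows "\<exists>d. nonzero_circulation k F d"
proof -
  let ?k' = "\<lambda>v. if k v = k b then k a else k v" and ?t = "net_inflow k (F - {e}) d (k a)"
  have split: "net_inflow k F (d(e := ?t)) c
      = net_inflow k (F - {e}) d c + ?t * (of_bool (k b = c) - of_bool (k a = c))" for c
    using fin e by (simp add: net_inflow_def sum.remove)
  have merged: "net_inflow ?k' (F - {e}) d (k a)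
      = net_inflow k (F - {e}) d (k a) + net_inflow k (F - {e}) d (k b)"
    unfolding net_inflow_def sum.distrib[symmetric]
    by (rule sum.cong) (use kab in \<open>auto simp: algebra_simps\<close>)
  have other: "net_inflow ?k' (F - {e}) d c = net_inflow k (F - {e}) d c" if "c \<noteq> k a" "c \<noteq> k b" for c
    unfolding net_inflow_def by (rule sum.cong) (use that in auto)
  have "net_inflow k F (d(e := ?t)) c = 0" for c
  proof -
    consider "c = k a" | "c = k b" | "c \<noteq> k a" "c \<noteq> k b" by blast
    then show ?thesis
      by cases (use split merged other circ kab in \<open>auto simp: nonzero_circulation_def\<close>)
  qed
  then have "nonzero_circulation k F (d(e := ?t))"
    using circ e by (auto simp: nonzero_circulation_def)
  then show ?thesis by blast
qed

text \<open>An edge e of F joins the classes k (fst e) and k (snd e). A loop or a pair of parallel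
  edges carries a circulation; otherwise an edge is contracted.\<close>
lemma nonzero_circulation_exists:
  assumes "finite F" "F \<noteq> {}" "\<forall>c. card {e\<in>F. crosses k c e} \<noteq> 1"
  shows "\<exists>d. nonzero_circulation k F d"
  using assms
proof (induction "card F" arbitrary: F k rule: less_induct)
  case less
  note fin = less.prems(1) and deg = less.prems(3)
  obtain e a b where e: "e \<in> F" "e = (a, b)" using less.prems(2) by auto
  show ?case
  proof (cases "\<exists>x\<in>F. k (fst x) = k (snd x)")
    case True
    then show ?thesis using circulation_on_loop[OF fin] by blast
  next
    case loopfree: False
    show ?thesis
    proof (cases "\<exists>x\<in>F - {e}. (k (fst x) = k a \<and> k (snd x) = k b) \<or> (k (fst x) = k b \<and> k (snd x) = k a)")
      case True
      then obtain x where "x \<in> F" "x \<noteq> e"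
        "(k (fst x) = k (fst e) \<and> k (snd x) = k (snd e)) \<or> (k (fst x) = k (snd e) \<and> k (snd x) = k (fst e))"
        using e(2) by auto
      then show ?thesis using circulation_on_parallel_edges[OF fin e(1)] by blast
    next
      case simple: False
      let ?k' = "\<lambda>v. if k v = k b then k a else k v"
      have kab: "k a \<noteq> k b" using loopfree e by auto
      then have "crosses k (k a) e" using e by (auto simp: crosses_def)
      then have nonempty: "F - {e} \<noteq> {}"
        using crossing_edge_not_alone[OF fin e(1) _ deg[THEN spec]] by blast
      have smaller: "card (F - {e}) < card F" by (rule card_Diff1_less[OF fin e(1)])
      have "\<forall>c. card {x\<in>F - {e}. crosses ?k' c x} \<noteq> 1"
        using crossing_card_after_contraction[OF fin e _ _ deg] loopfree simple by blast
      from less.hyps[OF smaller _ nonempty this] fin obtain d where "nonzero_circulation ?k' (F - {e}) d"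
        by blast
      then show ?thesis by (rule circulation_lift_contraction[OF fin e kab])
    qed
  qed
qed

section \<open>The leaving weight of a fractional orientation\<close>

text \<open>A vector x with entries in [-1, 0] is a fractional orientation of the edges D: x e = 0 keeps
  e = (a, b) directed from a to b and x e = -1 reverses it, so 1 + x e and - x e are the
  parts of e pointing forwards and backwards.\<close>
definition edge_leaving :: "('v \<times> 'v \<Rightarrow> real) \<Rightarrow> 'v set \<Rightarrow> 'v \<times> 'v \<Rightarrow> real" where
  "edge_leaving x U e =
     (if fst e \<in> U \<and> snd e \<notin> U then 1 + x e else 0) + (if snd e \<in> U \<and> fst e \<notin> U then - x e else 0)"

definition leaving_weight :: "('v \<times> 'v) set \<Rightarrow> ('v \<times> 'v \<Rightarrow> real) \<Rightarrow> 'v set \<Rightarrow> real" where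
  "leaving_weight D x U = (\<Sum>e\<in>D. edge_leaving x U e)"

definition net_outflow :: "('v \<times> 'v) set \<Rightarrow> ('v \<times> 'v \<Rightarrow> real) \<Rightarrow> 'v set \<Rightarrow> real" where
  "net_outflow D d U = (\<Sum>e\<in>D. d e * (of_bool (fst e \<in> U) - of_bool (snd e \<in> U)))"

lemma edge_leaving_nonneg: "-1 \<le> x e \<Longrightarrow> x e \<le> 0 \<Longrightarrow> 0 \<le> edge_leaving x U e"
  by (simp add: edge_leaving_def)

lemma edge_leaving_Ints: "x e = -1 \<or> x e = 0 \<Longrightarrow> edge_leaving x U e \<in> \<int>"
  by (auto simp: edge_leaving_def)

lemma leaving_weight_eq_cut:
  assumes "finite D"
  shows "leaving_weight D x U
    = real (card (delta_out D U)) + xsum x (delta_out D U) - xsum x (delta_in D U)"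
proof -
  have out: "delta_out D U = {e\<in>D. fst e \<in> U \<and> snd e \<notin> U}"
    and into: "delta_in D U = {e\<in>D. snd e \<in> U \<and> fst e \<notin> U}"
    by (auto simp: delta_out_def delta_in_def)
  have "leaving_weight D x U = (\<Sum>e\<in>D. if fst e \<in> U \<and> snd e \<notin> U then 1 + x e else 0)
      + (\<Sum>e\<in>D. if snd e \<in> U \<and> fst e \<notin> U then - x e else 0)"
    by (simp add: leaving_weight_def edge_leaving_def sum.distrib)
  also have "\<dots> = (\<Sum>e\<in>delta_out D U. 1 + x e) + (\<Sum>e\<in>delta_in D U. - x e)"
    using assms by (simp add: out into sum.inter_filter)
  finally show ?thesis
    by (simp add: xsum_def sum.distrib sum_negf)
qed

lemma leaving_weight_empty: "leaving_weight D x {} = 0"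
  by (simp add: leaving_weight_def edge_leaving_def)

lemma leaving_weight_whole: "D \<subseteq> C \<times> C \<Longrightarrow> leaving_weight D x C = 0"
  unfolding leaving_weight_def edge_leaving_def by (rule sum.neutral) auto

lemma leaving_weight_affine:
  "leaving_weight D (\<lambda>e. x e + s * d e) U = leaving_weight D x U + s * net_outflow D d U"
proof -
  have "edge_leaving (\<lambda>e. x e + s * d e) U e
      = edge_leaving x U e + s * (d e * (of_bool (fst e \<in> U) - of_bool (snd e \<in> U)))" for e
    by (cases "fst e \<in> U"; cases "snd e \<in> U") (simp_all add: edge_leaving_def algebra_simps)
  then show ?thesis
    by (simp add: leaving_weight_def net_outflow_def sum.distrib sum_distrib_left)
qed

lemma leaving_weight_submodular:
  assumes "\<forall>e\<in>D. -1 \<le> x e \<and> x e \<le> 0"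
  shows "leaving_weight D x (X \<inter> Y) + leaving_weight D x (X \<union> Y)
    \<le> leaving_weight D x X + leaving_weight D x Y"
proof -
  have "edge_leaving x (X \<inter> Y) e + edge_leaving x (X \<union> Y) e \<le> edge_leaving x X e + edge_leaving x Y e"
    if "e \<in> D" for e
    using assms that unfolding edge_leaving_def
    by (cases "fst e \<in> X"; cases "snd e \<in> X"; cases "fst e \<in> Y"; cases "snd e \<in> Y") auto
  then show ?thesis
    unfolding leaving_weight_def sum.distrib[symmetric] by (rule sum_mono)
qed

lemma leaving_weight_posimodular:
  assumes "D \<subseteq> C \<times> C" "\<forall>e\<in>D. -1 \<le> x e \<and> x e \<le> 0"
  shows "leaving_weight D x (X - Y) + leaving_weight D x (C - (Y - X))
    \<le> leaving_weight D x X + leaving_weight D x (C - Y)"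
proof -
  have "edge_leaving x (X - Y) e + edge_leaving x (C - (Y - X)) e
      \<le> edge_leaving x X e + edge_leaving x (C - Y) e" if "e \<in> D" for e
    using assms that unfolding edge_leaving_def
    by (cases "fst e \<in> X"; cases "snd e \<in> X"; cases "fst e \<in> Y"; cases "snd e \<in> Y") auto
  then show ?thesis
    unfolding leaving_weight_def sum.distrib[symmetric] by (rule sum_mono)
qed

lemma leaving_weight_disjoint_Un:
  assumes "finite D" "X \<inter> Y = {}"
  shows "leaving_weight D x (X \<union> Y) = leaving_weight D x X + leaving_weight D x Y
    - real (card {e\<in>D. (fst e \<in> X \<and> snd e \<in> Y) \<or> (fst e \<in> Y \<and> snd e \<in> X)})"
proof -
  have "edge_leaving x (X \<union> Y) e = edge_leaving x X e + edge_leaving x Y e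
      - of_bool ((fst e \<in> X \<and> snd e \<in> Y) \<or> (fst e \<in> Y \<and> snd e \<in> X))" for e
    using assms(2) unfolding edge_leaving_def
    by (cases "fst e \<in> X"; cases "snd e \<in> X"; cases "fst e \<in> Y"; cases "snd e \<in> Y") auto
  then show ?thesis
    using assms(1) by (simp add: leaving_weight_def sum.distrib sum_subtractf of_bool_def sum.If_cases Int_def)
qed

lemma leaving_weight_complement_Ints:
  assumes "finite D" "D \<subseteq> C \<times> C" "X \<subseteq> C"
  shows "leaving_weight D x (C - X) \<in> \<int> \<longleftrightarrow> leaving_weight D x X \<in> \<int>"
proof -
  let ?m = "card {e\<in>D. (fst e \<in> X \<and> snd e \<in> C - X) \<or> (fst e \<in> C - X \<and> snd e \<in> X)}"
  have "X \<union> (C - X) = C" "X \<inter> (C - X) = {}" using assms(3) by auto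
  then have "0 = leaving_weight D x X + leaving_weight D x (C - X) - real ?m"
    using leaving_weight_disjoint_Un[OF assms(1), of X "C - X" x] leaving_weight_whole[OF assms(2)]
    by simp
  then have compl: "leaving_weight D x (C - X) = real ?m - leaving_weight D x X"
    and orig: "leaving_weight D x X = real ?m - leaving_weight D x (C - X)" by simp_all
  show ?thesis
  proof
    assume "leaving_weight D x (C - X) \<in> \<int>"
    then show "leaving_weight D x X \<in> \<int>" unfolding orig by (intro Ints_diff) auto
  next
    assume "leaving_weight D x X \<in> \<int>"
    then show "leaving_weight D x (C - X) \<in> \<int>" unfolding compl by (intro Ints_diff) auto
  qed
qed

section \<open>Vertices of the strong orientation polytope are integral\<close>

definition strong_orientation_polytope :: "'v set \<Rightarrow> ('v \<times> 'v) set \<Rightarrow> ('v \<times> 'v \<Rightarrow> real) set" where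
  "strong_orientation_polytope C D =
     {y. (\<forall>e. e \<notin> D \<longrightarrow> y e = 0) \<and> (\<forall>e\<in>D. -1 \<le> y e \<and> y e \<le> 0) \<and>
         (\<forall>U. U \<subseteq> C \<and> U \<noteq> {} \<and> U \<noteq> C \<longrightarrow> 1 \<le> leaving_weight D y U)}"

lemma polyF_box_eq_strong_orientation_polytope:
  assumes "finite (At - Y)"
  shows "polyF_box C At Y = strong_orientation_polytope C (At - Y)"
proof -
  have "xsum y (delta_in (At - Y) U) - xsum y (delta_out (At - Y) U)
      \<le> real (card (delta_out (At - Y) U)) - 1 \<longleftrightarrow> 1 \<le> leaving_weight (At - Y) y U" for y U
    using leaving_weight_eq_cut[OF assms, of y U] by linarith
  then show ?thesis
    unfolding polyF_box_def strong_orientation_polytope_def vecs_on_def by auto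
qed

locale fractional_strong_orientation =
  fixes C :: "'v set" and D :: "('v \<times> 'v) set" and x :: "'v \<times> 'v \<Rightarrow> real"
  assumes finite_C: "finite C" and D_sub: "D \<subseteq> C \<times> C"
    and x_in_polytope: "x \<in> strong_orientation_polytope C D"
begin

lemma finite_D: "finite D"
  using finite_C D_sub by (meson finite_SigmaI finite_subset)

lemma x_zero: "e \<notin> D \<Longrightarrow> x e = 0"
  using x_in_polytope unfolding strong_orientation_polytope_def by blast

lemma x_box: "\<forall>e\<in>D. -1 \<le> x e \<and> x e \<le> 0"
  using x_in_polytope by (simp add: strong_orientation_polytope_def)

lemma x_cut: "U \<subseteq> C \<Longrightarrow> U \<noteq> {} \<Longrightarrow> U \<noteq> C \<Longrightarrow> 1 \<le> leaving_weight D x U"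
  using x_in_polytope by (simp add: strong_orientation_polytope_def)

definition tight :: "'v set \<Rightarrow> bool" where
  "tight U \<longleftrightarrow> U \<subseteq> C \<and> U \<noteq> {} \<and> U \<noteq> C \<and> leaving_weight D x U = 1"

definition tight_side_avoiding :: "'v \<Rightarrow> 'v set \<Rightarrow> bool" where
  "tight_side_avoiding u X \<longleftrightarrow> X \<subseteq> C \<and> X \<noteq> {} \<and> u \<notin> X \<and>
     (leaving_weight D x X = 1 \<or> leaving_weight D x (C - X) = 1)"

lemma tight_side_Ints: "tight_side_avoiding u X \<Longrightarrow> leaving_weight D x X \<in> \<int>"
  using leaving_weight_complement_Ints[OF finite_D D_sub]
  unfolding tight_side_avoiding_def by (metis Ints_1)

lemma tight_side_uncross:
  assumes u: "u \<in> C" and Z: "tight_side_avoiding u Z" and X: "tight_side_avoiding u X"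
    and meet: "Z \<inter> X \<noteq> {}" and "\<not> Z \<subseteq> X" "\<not> X \<subseteq> Z"
  shows "tight_side_avoiding u (Z \<union> X) \<or> tight_side_avoiding u (Z - X)"
proof -
  have sub: "Z \<subseteq> C" "X \<subseteq> C" "u \<notin> Z" "u \<notin> X" "Z \<noteq> {}" "X \<noteq> {}"
    using Z X by (auto simp: tight_side_avoiding_def)
  note submod = leaving_weight_submodular[OF x_box]
  note posimod = leaving_weight_posimodular[OF D_sub x_box]
  consider "leaving_weight D x Z = 1" "leaving_weight D x X = 1"
    | "leaving_weight D x (C - Z) = 1" "leaving_weight D x (C - X) = 1"
    | "leaving_weight D x Z = 1" "leaving_weight D x (C - X) = 1"
    | "leaving_weight D x (C - Z) = 1" "leaving_weight D x X = 1"
    using Z X unfolding tight_side_avoiding_def by blast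
  then show ?thesis
  proof cases
    case 1
    have "1 \<le> leaving_weight D x (Z \<inter> X)" "1 \<le> leaving_weight D x (Z \<union> X)"
      using sub meet u by (auto intro!: x_cut)
    then have "leaving_weight D x (Z \<union> X) = 1" using submod[of Z X] 1 by linarith
    then show ?thesis using sub meet by (auto simp: tight_side_avoiding_def)
  next
    case 2
    have "leaving_weight D x (C - (Z \<union> X)) + leaving_weight D x (C - (Z \<inter> X)) \<le> 2"
      using submod[of "C - Z" "C - X"] 2 by (simp add: Diff_Un Diff_Int)
    moreover have "1 \<le> leaving_weight D x (C - (Z \<union> X))" "1 \<le> leaving_weight D x (C - (Z \<inter> X))"
      using sub meet u by (auto intro!: x_cut)
    ultimately have "leaving_weight D x (C - (Z \<union> X)) = 1" by linarith
    then show ?thesis using sub meet by (auto simp: tight_side_avoiding_def)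
  next
    case 3
    have "1 \<le> leaving_weight D x (Z - X)" "1 \<le> leaving_weight D x (C - (X - Z))"
      using sub u assms(5,6) by (auto intro!: x_cut)
    then have "leaving_weight D x (Z - X) = 1" using posimod[of Z X] 3 by linarith
    then show ?thesis using sub assms(5) by (auto simp: tight_side_avoiding_def)
  next
    case 4
    have "1 \<le> leaving_weight D x (X - Z)" "1 \<le> leaving_weight D x (C - (Z - X))"
      using sub u assms(5,6) by (auto intro!: x_cut)
    then have "leaving_weight D x (C - (Z - X)) = 1" using posimod[of X Z] 4 by linarith
    then show ?thesis using sub assms(5) by (auto simp: tight_side_avoiding_def)
  qed
qed

text \<open>Uncrossing against a maximal tight side X inside S.\<close>
lemma Union_tight_sides_Diff_maximal:
  assumes u: "u \<in> C" and X: "tight_side_avoiding u X" "X \<subseteq> S"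
    and X_max: "\<forall>Z. tight_side_avoiding u Z \<and> Z \<subseteq> S \<and> X \<subseteq> Z \<longrightarrow> Z = X"
    and W: "S = \<Union>W" "\<forall>Z\<in>W. tight_side_avoiding u Z"
  shows "S - X = \<Union>{Z - X | Z. Z \<in> W \<and> \<not> Z \<subseteq> X}"
    and "\<forall>Z'\<in>{Z - X | Z. Z \<in> W \<and> \<not> Z \<subseteq> X}. tight_side_avoiding u Z'"
proof -
  show "S - X = \<Union>{Z - X | Z. Z \<in> W \<and> \<not> Z \<subseteq> X}" using W(1) by blast
  have "tight_side_avoiding u (Z - X)" if Z: "Z \<in> W" "\<not> Z \<subseteq> X" for Z
  proof (cases "Z \<inter> X = {}")
    case True
    then show ?thesis using Z W(2) by (simp add: Diff_triv)
  next
    case False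
    have Z_side: "tight_side_avoiding u Z" "Z \<subseteq> S" using Z W by auto
    then have "\<not> X \<subseteq> Z" using X_max Z(2) by blast
    moreover have "\<not> tight_side_avoiding u (Z \<union> X)"
      using X_max Z_side(2) X(2) Z(2) by blast
    ultimately show ?thesis
      using tight_side_uncross[OF u Z_side(1) X(1) False Z(2)] by blast
  qed
  then show "\<forall>Z'\<in>{Z - X | Z. Z \<in> W \<and> \<not> Z \<subseteq> X}. tight_side_avoiding u Z'" by blast
qed

text \<open>Peel off a maximal tight side X; X and S - X are joined by whole edges only.\<close>
lemma Union_tight_sides_Ints:
  assumes u: "u \<in> C" and W: "\<forall>X\<in>W. tight_side_avoiding u X"
  shows "leaving_weight D x (\<Union>W) \<in> \<int>"
proof -
  have "leaving_weight D x S \<in> \<int>" if "S = \<Union>W" "\<forall>X\<in>W. tight_side_avoiding u X" for S W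
    using that
  proof (induction "card S" arbitrary: S W rule: less_induct)
    case less
    have S_sub: "S \<subseteq> C" using less.prems by (auto simp: tight_side_avoiding_def)
    show ?case
    proof (cases "S = {}")
      case True
      then show ?thesis by (simp add: leaving_weight_empty)
    next
      case False
      let ?SS = "{X. tight_side_avoiding u X \<and> X \<subseteq> S}"
      have fin: "finite ?SS" using S_sub finite_C by (auto intro: finite_subset[of _ "Pow C"])
      have nonempty: "?SS \<noteq> {}" using False less.prems by auto
      obtain X where "X \<in> ?SS" and "\<forall>Z\<in>?SS. X \<subseteq> Z \<longrightarrow> X = Z"
        using finite_has_maximal[OF fin nonempty] by blast
      then have X: "tight_side_avoiding u X" "X \<subseteq> S"
        and X_max: "\<forall>Z. tight_side_avoiding u Z \<and> Z \<subseteq> S \<and> X \<subseteq> Z \<longrightarrow> Z = X" by auto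
      note peel = Union_tight_sides_Diff_maximal[OF u X X_max less.prems]
      have "card (S - X) < card S"
      proof (rule psubset_card_mono)
        show "finite S" using S_sub finite_C by (rule finite_subset)
        show "S - X \<subset> S" using X by (auto simp: tight_side_avoiding_def)
      qed
      from less.hyps[OF this peel] have "leaving_weight D x (S - X) \<in> \<int>" .
      moreover have disj: "X \<inter> (S - X) = {}" and union: "X \<union> (S - X) = S" using X(2) by auto
      from leaving_weight_disjoint_Un[OF finite_D disj, of x] obtain m :: nat
        where "leaving_weight D x S = leaving_weight D x X + leaving_weight D x (S - X) - m"
        unfolding union by (rule that)
      ultimately show ?thesis
        using tight_side_Ints[OF X(1)] by (simp add: Ints_diff Ints_add)
    qed
  qed
  then show ?thesis using W by blast
qed

definition tight_sets_through :: "'v \<Rightarrow> 'v set set" where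
  "tight_sets_through v = {U. tight U \<and> v \<in> U}"

lemma tight_class_leaving_weight_Ints:
  assumes u: "u \<in> C"
  shows "leaving_weight D x {v\<in>C. tight_sets_through v = tight_sets_through u} \<in> \<int>"
proof -
  define \<alpha> where "\<alpha> = {v\<in>C. tight_sets_through v = tight_sets_through u}"
  have same_side: "v \<in> U \<longleftrightarrow> u \<in> U" if "v \<in> \<alpha>" "tight U" for v U
    using that by (auto simp: \<alpha>_def tight_sets_through_def)
  define W where "W = {X. tight_side_avoiding u X \<and> X \<inter> \<alpha> = {}}"
  have "C - \<alpha> \<subseteq> \<Union>W"
  proof
    fix y assume y: "y \<in> C - \<alpha>"
    then obtain U where U: "tight U" "y \<in> U \<longleftrightarrow> u \<notin> U"
      by (auto simp: \<alpha>_def tight_sets_through_def)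
    then have U_props: "U \<subseteq> C" "U \<noteq> {}" "U \<noteq> C" "leaving_weight D x U = 1"
      by (auto simp: tight_def)
    show "y \<in> \<Union>W"
    proof (cases "y \<in> U")
      case True
      then have "U \<in> W" using U U_props same_side by (auto simp: W_def tight_side_avoiding_def)
      then show ?thesis using True by blast
    next
      case False
      have "C - (C - U) = U" using U_props by auto
      then have "C - U \<in> W" using U U_props same_side False y
        by (auto simp: W_def tight_side_avoiding_def)
      then show ?thesis using False y by blast
    qed
  qed
  moreover have "\<Union>W \<subseteq> C - \<alpha>" by (auto simp: W_def tight_side_avoiding_def)
  ultimately have "leaving_weight D x (C - \<alpha>) \<in> \<int>"
    using Union_tight_sides_Ints[OF u, of W] by (simp add: W_def)
  then show ?thesis
    using leaving_weight_complement_Ints[OF finite_D D_sub] unfolding \<alpha>_def by auto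
qed

definition fractional_edges :: "('v \<times> 'v) set" where
  "fractional_edges = {e\<in>D. -1 < x e \<and> x e < 0}"

text \<open>Otherwise the class of the single crossing fractional edge would have non-integral leaving
  weight, because all other edges contribute an integer.\<close>
lemma fractional_crossing_card_ne_1:
  "card {e\<in>fractional_edges. crosses tight_sets_through c e} \<noteq> 1"
proof
  assume "card {e\<in>fractional_edges. crosses tight_sets_through c e} = 1"
  then obtain e0 where e0: "{e\<in>fractional_edges. crosses tight_sets_through c e} = {e0}"
    by (rule card_1_singletonE)
  then have e0_frac: "e0 \<in> D" "-1 < x e0" "x e0 < 0" and e0_cross: "crosses tight_sets_through c e0"
    by (auto simp: fractional_edges_def)
  have e0_C: "fst e0 \<in> C" "snd e0 \<in> C" using e0_frac D_sub by auto
  define u where "u = (if tight_sets_through (fst e0) = c then fst e0 else snd e0)"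
  have u: "u \<in> C" "tight_sets_through u = c"
    using e0_C e0_cross by (auto simp: u_def crosses_def)
  define \<alpha> where "\<alpha> = {v\<in>C. tight_sets_through v = c}"
  have "leaving_weight D x \<alpha> \<in> \<int>"
    using tight_class_leaving_weight_Ints[OF u(1)] by (simp add: \<alpha>_def u(2))
  moreover have "edge_leaving x \<alpha> e \<in> \<int>" if "e \<in> D - {e0}" for e
  proof (cases "e \<in> fractional_edges")
    case True
    then have "\<not> crosses tight_sets_through c e" using e0 that by auto
    moreover have "fst e \<in> C" "snd e \<in> C" using that D_sub by auto
    ultimately have "edge_leaving x \<alpha> e = 0" by (auto simp: edge_leaving_def crosses_def \<alpha>_def)
    then show ?thesis by simp
  next
    case False
    then show ?thesis using x_box that by (intro edge_leaving_Ints) (force simp: fractional_edges_def)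
  qed
  then have "(\<Sum>e\<in>D - {e0}. edge_leaving x \<alpha> e) \<in> \<int>" by (intro Ints_sum)
  moreover have "edge_leaving x \<alpha> e0 = leaving_weight D x \<alpha> - (\<Sum>e\<in>D - {e0}. edge_leaving x \<alpha> e)"
    using finite_D e0_frac(1) by (simp add: leaving_weight_def sum.remove)
  ultimately have "edge_leaving x \<alpha> e0 \<in> \<int>" by (simp add: Ints_diff)
  then obtain k :: int where k: "edge_leaving x \<alpha> e0 = of_int k" by (rule Ints_cases)
  have "0 < edge_leaving x \<alpha> e0" "edge_leaving x \<alpha> e0 < 1"
    using e0_frac(2,3) e0_C e0_cross by (auto simp: edge_leaving_def crosses_def \<alpha>_def)
  then have "0 < k" "k < 1" unfolding k by simp_all
  then show False by simp
qed

lemma net_outflow_tight_eq_0: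
  assumes d_supp: "\<forall>e. e \<notin> fractional_edges \<longrightarrow> d e = 0"
    and circ: "\<forall>c. net_inflow tight_sets_through fractional_edges d c = 0"
    and U: "tight U"
  shows "net_outflow D d U = 0"
proof -
  let ?T = tight_sets_through and ?F = fractional_edges
  have finite_U: "finite U" using U finite_C by (auto simp: tight_def intro: finite_subset)
  have indicator: "(\<Sum>c\<in>?T ` U. of_bool (?T w = c)) = (of_bool (w \<in> U) :: real)" for w
  proof -
    have "?T w \<in> ?T ` U \<longleftrightarrow> w \<in> U"
      using U by (auto simp: tight_sets_through_def)
    then show ?thesis using finite_U by (simp add: of_bool_def sum.delta)
  qed
  have "net_outflow D d U = net_outflow ?F d U"
    unfolding net_outflow_def using finite_D d_supp
    by (intro sum.mono_neutral_right) (auto simp: fractional_edges_def)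
  also have "\<dots> = - (\<Sum>e\<in>?F. d e * ((\<Sum>c\<in>?T ` U. of_bool (?T (snd e) = c))
      - (\<Sum>c\<in>?T ` U. of_bool (?T (fst e) = c))))"
    by (simp add: net_outflow_def indicator sum_negf[symmetric] algebra_simps)
  also have "\<dots> = - (\<Sum>c\<in>?T ` U. net_inflow ?T ?F d c)"
    unfolding net_inflow_def sum_subtractf[symmetric] sum_distrib_left by (subst sum.swap) simp
  also have "\<dots> = 0" using circ by simp
  finally show ?thesis .
qed

lemma eventually_slack_kept:
  "\<forall>\<^sub>F s in nhds 0. (\<forall>e\<in>fractional_edges. -1 < x e + s * d e \<and> x e + s * d e < 0) \<and>
     (\<forall>U\<in>{U. U \<subseteq> C \<and> U \<noteq> {} \<and> U \<noteq> C \<and> \<not> tight U}. 1 < leaving_weight D x U + s * net_outflow D d U)"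
proof (rule eventually_conj)
  have "\<forall>\<^sub>F s in nhds 0. -1 < x e + s * d e \<and> x e + s * d e < 0" if "e \<in> fractional_edges" for e
  proof -
    have "((\<lambda>s. x e + s * d e) \<longlongrightarrow> x e) (nhds 0)"
      by (auto intro!: tendsto_eq_intros filterlim_ident)
    then show ?thesis
      using that by (auto simp: fractional_edges_def intro: eventually_conj order_tendstoD)
  qed
  moreover have "finite fractional_edges" using finite_D by (simp add: fractional_edges_def)
  ultimately show "\<forall>\<^sub>F s in nhds 0. \<forall>e\<in>fractional_edges. -1 < x e + s * d e \<and> x e + s * d e < 0"
    by (intro eventually_ball_finite) auto
next
  let ?loose = "{U. U \<subseteq> C \<and> U \<noteq> {} \<and> U \<noteq> C \<and> \<not> tight U}"
  have "\<forall>\<^sub>F s in nhds 0. 1 < leaving_weight D x U + s * net_outflow D d U" if "U \<in> ?loose" for U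
  proof -
    have "1 < leaving_weight D x U" using that x_cut[of U] by (auto simp: tight_def)
    moreover have "((\<lambda>s. leaving_weight D x U + s * net_outflow D d U) \<longlongrightarrow> leaving_weight D x U) (nhds 0)"
      by (auto intro!: tendsto_eq_intros filterlim_ident)
    ultimately show ?thesis by (auto intro: order_tendstoD)
  qed
  moreover have "finite ?loose" using finite_C by (auto intro: finite_subset[of _ "Pow C"])
  ultimately show "\<forall>\<^sub>F s in nhds 0. \<forall>U\<in>?loose. 1 < leaving_weight D x U + s * net_outflow D d U"
    by (intro eventually_ball_finite) auto
qed

lemma perturbation_in_polytope_if_slack_kept:
  assumes d_supp: "\<forall>e. e \<notin> fractional_edges \<longrightarrow> d e = 0"
    and tight_kept: "\<forall>U. tight U \<longrightarrow> net_outflow D d U = 0"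
    and edges: "\<forall>e\<in>fractional_edges. -1 < x e + s * d e \<and> x e + s * d e < 0"
    and cuts: "\<forall>U\<in>{U. U \<subseteq> C \<and> U \<noteq> {} \<and> U \<noteq> C \<and> \<not> tight U}.
      1 < leaving_weight D x U + s * net_outflow D d U"
  shows "(\<lambda>e. x e + s * d e) \<in> strong_orientation_polytope C D"
proof -
  have "x e + s * d e = 0" if "e \<notin> D" for e
  proof -
    have "e \<notin> fractional_edges" using that by (simp add: fractional_edges_def)
    then have "d e = 0" using d_supp by blast
    then show ?thesis using x_zero that by simp
  qed
  moreover have "-1 \<le> x e + s * d e \<and> x e + s * d e \<le> 0" if e: "e \<in> D" for e
  proof (cases "e \<in> fractional_edges")
    case True
    then show ?thesis using edges by force
  next
    case False
    then have "d e = 0" using d_supp by blast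
    then show ?thesis using x_box e by simp
  qed
  moreover have "1 \<le> leaving_weight D (\<lambda>e. x e + s * d e) U"
    if U: "U \<subseteq> C" "U \<noteq> {}" "U \<noteq> C" for U
  proof (cases "tight U")
    case True
    then show ?thesis using tight_kept by (simp add: leaving_weight_affine tight_def)
  next
    case False
    then have "1 < leaving_weight D x U + s * net_outflow D d U" using cuts U by blast
    then show ?thesis by (simp add: leaving_weight_affine)
  qed
  ultimately show ?thesis unfolding strong_orientation_polytope_def by blast
qed

lemma perturbation_in_polytope:
  assumes d_supp: "\<forall>e. e \<notin> fractional_edges \<longrightarrow> d e = 0"
    and tight_kept: "\<forall>U. tight U \<longrightarrow> net_outflow D d U = 0"
  shows "\<exists>\<epsilon>>0. \<forall>s. \<bar>s\<bar> < \<epsilon> \<longrightarrow> (\<lambda>e. x e + s * d e) \<in> strong_orientation_polytope C D"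
proof -
  obtain \<epsilon> :: real where "\<epsilon> > 0" and \<epsilon>:
    "\<forall>s. dist s 0 < \<epsilon> \<longrightarrow> (\<forall>e\<in>fractional_edges. -1 < x e + s * d e \<and> x e + s * d e < 0) \<and>
       (\<forall>U\<in>{U. U \<subseteq> C \<and> U \<noteq> {} \<and> U \<noteq> C \<and> \<not> tight U}. 1 < leaving_weight D x U + s * net_outflow D d U)"
    using eventually_slack_kept[of d] unfolding eventually_nhds_metric by blast
  have "(\<lambda>e. x e + s * d e) \<in> strong_orientation_polytope C D" if "\<bar>s\<bar> < \<epsilon>" for s
    using \<epsilon> that by (intro perturbation_in_polytope_if_slack_kept[OF d_supp tight_kept]) simp_all
  then show ?thesis using \<open>\<epsilon> > 0\<close> by blast
qed

lemma fractional_point_is_midpoint: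
  assumes "e1 \<in> D" "x e1 \<noteq> -1" "x e1 \<noteq> 0"
  shows "\<exists>y\<in>strong_orientation_polytope C D. \<exists>z\<in>strong_orientation_polytope C D.
    y \<noteq> z \<and> x = (\<lambda>e. 1/2 * y e + (1 - 1/2) * z e)"
proof -
  have "e1 \<in> fractional_edges" using assms x_box by (force simp: fractional_edges_def)
  then have "fractional_edges \<noteq> {}" by blast
  moreover have "finite fractional_edges" using finite_D by (simp add: fractional_edges_def)
  ultimately obtain d where "nonzero_circulation tight_sets_through fractional_edges d"
    using nonzero_circulation_exists[OF _ _ allI[OF fractional_crossing_card_ne_1]] by blast
  then have d_supp: "\<forall>e. e \<notin> fractional_edges \<longrightarrow> d e = 0"
    and d_nonzero: "\<exists>e\<in>fractional_edges. d e \<noteq> 0"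
    and circ: "\<forall>c. net_inflow tight_sets_through fractional_edges d c = 0"
    by (simp_all add: nonzero_circulation_def)
  have "\<forall>U. tight U \<longrightarrow> net_outflow D d U = 0"
    using net_outflow_tight_eq_0[OF d_supp circ] by blast
  then obtain \<epsilon> :: real where "\<epsilon> > 0"
    and \<epsilon>: "\<forall>s. \<bar>s\<bar> < \<epsilon> \<longrightarrow> (\<lambda>e. x e + s * d e) \<in> strong_orientation_polytope C D"
    using perturbation_in_polytope[OF d_supp] by blast
  let ?y = "\<lambda>e. x e + (\<epsilon> / 2) * d e" and ?z = "\<lambda>e. x e + (- (\<epsilon> / 2)) * d e"
  have "?y \<in> strong_orientation_polytope C D" "?z \<in> strong_orientation_polytope C D"
    using \<epsilon>[rule_format, of "\<epsilon> / 2"] \<epsilon>[rule_format, of "- (\<epsilon> / 2)"] \<open>\<epsilon> > 0\<close> by simp_all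
  moreover have "?y \<noteq> ?z"
  proof -
    obtain e where "d e \<noteq> 0" using d_nonzero by blast
    show ?thesis
    proof
      assume "?y = ?z"
      then have "?y e = ?z e" by (rule fun_cong)
      then show False using \<open>d e \<noteq> 0\<close> \<open>\<epsilon> > 0\<close> by simp
    qed
  qed
  moreover have "x = (\<lambda>e. 1/2 * ?y e + (1 - 1/2) * ?z e)"
    by (simp add: algebra_simps)
  ultimately show ?thesis by blast
qed

end

lemma vertex_of_strong_orientation_polytope_integral:
  fixes x :: "edge \<Rightarrow> real"
  assumes "finite C" "D \<subseteq> C \<times> C" and vertex: "is_vertex (strong_orientation_polytope C D) x"
    and "e \<in> D"
  shows "x e = -1 \<or> x e = 0"
proof (rule ccontr)
  interpret fractional_strong_orientation C D x
    using assms vertex by unfold_locales (simp_all add: is_vertex_def)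
  assume "\<not> (x e = -1 \<or> x e = 0)"
  then obtain y z where "y \<in> strong_orientation_polytope C D" "z \<in> strong_orientation_polytope C D"
    "y \<noteq> z" "x = (\<lambda>e. 1/2 * y e + (1 - 1/2) * z e)"
    using fractional_point_is_midpoint[OF \<open>e \<in> D\<close>] by blast
  moreover have "(0::real) < 1/2" "(1/2::real) < 1" by simp_all
  ultimately show False using vertex unfolding is_vertex_def by blast
qed

lemma convex_combination_eq_lower_bound:
  fixes a p q t :: real
  assumes "0 < t" "t < 1" "a \<le> p" "a \<le> q" "t * p + (1 - t) * q = a"
  shows "p = a \<and> q = a"
proof -
  have "0 \<le> t * (p - a)" "0 \<le> (1 - t) * (q - a)" using assms(1-4) by simp_all
  moreover have "t * (p - a) + (1 - t) * (q - a) = 0" using assms(5) by (simp add: algebra_simps)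
  ultimately have "t * (p - a) = 0" "(1 - t) * (q - a) = 0" by linarith+
  then show ?thesis using assms(1,2) by simp
qed

lemma integral_point_is_vertex:
  fixes x :: "edge \<Rightarrow> real"
  assumes "x \<in> P"
    and zero: "\<And>y e. y \<in> P \<Longrightarrow> e \<notin> D \<Longrightarrow> y e = 0"
    and box: "\<And>y e. y \<in> P \<Longrightarrow> e \<in> D \<Longrightarrow> -1 \<le> y e \<and> y e \<le> 0"
    and integral: "\<And>e. e \<in> D \<Longrightarrow> x e = -1 \<or> x e = 0"
  shows "is_vertex P x"
  unfolding is_vertex_def
proof (intro conjI notI \<open>x \<in> P\<close>)
  assume "\<exists>y\<in>P. \<exists>z\<in>P. y \<noteq> z \<and> (\<exists>t::real. 0 < t \<and> t < 1 \<and> x = (\<lambda>e. t * y e + (1 - t) * z e))"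
  then obtain y z t where yz: "y \<in> P" "z \<in> P" "y \<noteq> z" and t: "0 < t" "t < 1"
    and x: "x = (\<lambda>e. t * y e + (1 - t) * z e)" by blast
  have "y e = z e" for e
  proof (cases "e \<in> D")
    case False
    then show ?thesis using zero[OF yz(1) False] zero[OF yz(2) False] by simp
  next
    case True
    have y: "-1 \<le> y e" "y e \<le> 0" and z: "-1 \<le> z e" "z e \<le> 0" using box yz True by auto
    have xe: "t * y e + (1 - t) * z e = x e" using x by simp
    consider "x e = 0" | "x e = -1" using integral True by blast
    then show ?thesis
    proof cases
      case 1
      then have "t * (- y e) + (1 - t) * (- z e) = 0" using xe by (simp add: algebra_simps)
      with y z have "- y e = 0 \<and> - z e = 0"
        by (intro convex_combination_eq_lower_bound[OF t]) simp_all
      then show ?thesis by simp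
    next
      case 2
      then have "y e = -1 \<and> z e = -1"
        using xe y z by (intro convex_combination_eq_lower_bound[OF t]) simp_all
      then show ?thesis by simp
    qed
  qed
  then show False using yz(3) by blast
qed

section \<open>Maximising a linear form over {-1, 0}^D\<close>

lemma finite_pm_vecs:
  assumes "finite D"
  shows "finite (pm_vecs D)"
proof -
  have "pm_vecs D \<subseteq> (\<lambda>g e. if e \<in> D then g e else 0) ` (PiE D (\<lambda>_. {-1, 0::real}))"
  proof
    fix y assume y: "y \<in> pm_vecs D"
    then have "restrict y D \<in> PiE D (\<lambda>_. {-1, 0})" "y = (\<lambda>e. if e \<in> D then restrict y D e else 0)"
      by (auto simp: pm_vecs_def vecs_on_def PiE_iff)
    then show "y \<in> (\<lambda>g e. if e \<in> D then g e else 0) ` (PiE D (\<lambda>_. {-1, 0::real}))" by blast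
  qed
  moreover have "finite (PiE D (\<lambda>_. {-1, 0::real}))" using assms by (intro finite_PiE) auto
  ultimately show ?thesis by (meson finite_imageI finite_subset)
qed

lemma weighted_entry_le: "-1 \<le> y \<Longrightarrow> y \<le> (0::real) \<Longrightarrow> w * y \<le> max 0 (- w)"
proof (cases "0 \<le> w")
  case True
  then show "y \<le> 0 \<Longrightarrow> w * y \<le> max 0 (- w)" by (simp add: mult_nonneg_nonpos)
next
  case False
  then show "-1 \<le> y \<Longrightarrow> w * y \<le> max 0 (- w)" using mult_left_mono_neg[of "-1" y w] by simp
qed

lemma wmax_eq_sum:
  assumes "finite D"
  shows "wmax D w = (\<Sum>e\<in>D. max 0 (- w e))"
  unfolding wmax_def
proof (rule Max_eqI)
  show "finite (wdot D w ` pm_vecs D)" using finite_pm_vecs[OF assms] by simp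
  show "v \<le> (\<Sum>e\<in>D. max 0 (- w e))" if v: "v \<in> wdot D w ` pm_vecs D" for v
  proof -
    obtain y where y: "y \<in> pm_vecs D" and "v = wdot D w y" using v by blast
    then have "v = (\<Sum>e\<in>D. w e * y e)" by (simp add: wdot_def)
    also have "\<dots> \<le> (\<Sum>e\<in>D. max 0 (- w e))"
      using y by (intro sum_mono weighted_entry_le) (auto simp: pm_vecs_def)
    finally show ?thesis .
  qed
  let ?y = "\<lambda>e. if e \<in> D \<and> w e < 0 then (-1::real) else 0"
  have "?y \<in> pm_vecs D" by (auto simp: pm_vecs_def vecs_on_def)
  moreover have "wdot D w ?y = (\<Sum>e\<in>D. max 0 (- w e))"
    unfolding wdot_def by (rule sum.cong) auto
  ultimately show "(\<Sum>e\<in>D. max 0 (- w e)) \<in> wdot D w ` pm_vecs D"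
    by (intro image_eqI[where x = ?y]) simp_all
qed

lemma wdot_le_wmax:
  assumes "finite D" "\<forall>e\<in>D. -1 \<le> x e \<and> x e \<le> 0"
  shows "wdot D w x \<le> wmax D w"
  unfolding wmax_eq_sum[OF assms(1)] wdot_def
  by (intro sum_mono weighted_entry_le) (use assms(2) in auto)

lemma wdot_eq_wmax_iff:
  assumes "finite D" "\<forall>e\<in>D. -1 \<le> x e \<and> x e \<le> 0"
  shows "wdot D w x = wmax D w \<longleftrightarrow> (\<forall>e\<in>D. w e * x e = max 0 (- w e))"
proof -
  have "wdot D w x = wmax D w \<longleftrightarrow> (\<Sum>e\<in>D. max 0 (- w e) - w e * x e) = 0"
    by (auto simp: wmax_eq_sum[OF assms(1)] wdot_def sum_subtractf)
  also have "\<dots> \<longleftrightarrow> (\<forall>e\<in>D. max 0 (- w e) - w e * x e = 0)"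
    using assms weighted_entry_le by (intro sum_nonneg_eq_0_iff) auto
  finally show ?thesis by auto
qed

section \<open>Reachability\<close>

lemma rtrancl_if_every_cut_crossed:
  assumes cuts: "\<forall>U. U \<subseteq> C \<and> U \<noteq> {} \<and> U \<noteq> C \<longrightarrow> (\<exists>p\<in>U. \<exists>q\<in>C - U. (p, q) \<in> E)"
    and "i \<in> C" "j \<in> C"
  shows "(i, j) \<in> E\<^sup>*"
proof -
  define R where "R = {k\<in>C. (i, k) \<in> E\<^sup>*}"
  have "R = C"
  proof (rule ccontr)
    assume "R \<noteq> C"
    moreover have "R \<subseteq> C" "R \<noteq> {}" using \<open>i \<in> C\<close> by (auto simp: R_def)
    ultimately obtain p q where "p \<in> R" "q \<in> C - R" "(p, q) \<in> E" using cuts by blast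
    then show False by (auto simp: R_def intro: rtrancl_into_rtrancl)
  qed
  then show ?thesis using \<open>j \<in> C\<close> by (auto simp: R_def)
qed

lemma rtrancl_leaves_set:
  assumes "(i, j) \<in> E\<^sup>*" "i \<in> U" "j \<notin> U"
  shows "\<exists>p q. (p, q) \<in> E \<and> p \<in> U \<and> q \<notin> U"
  using assms by (induction rule: rtrancl_induct) auto

lemma is_SCC_if_strongly_connected_and_closed:
  assumes "C \<subseteq> {1..n}" "i \<in> C"
    and strong: "\<forall>a\<in>C. \<forall>b\<in>C. (a, b) \<in> E\<^sup>*"
    and closed: "\<forall>j. (i, j) \<in> E\<^sup>+ \<longrightarrow> j \<in> C"
  shows "is_SCC n E C"
  unfolding is_SCC_def
proof (intro bexI[of _ i] set_eqI iffI)
  fix j assume "j \<in> C"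
  then have "(i, j) \<in> E\<^sup>*" "(j, i) \<in> E\<^sup>*" using strong \<open>i \<in> C\<close> by blast+
  then have "i = j \<or> ((i, j) \<in> E\<^sup>+ \<and> (j, i) \<in> E\<^sup>+)"
    using rtranclD[of i j] rtranclD[of j i] by blast
  then show "j \<in> {j \<in> {1..n}. i = j \<or> ((i, j) \<in> E\<^sup>+ \<and> (j, i) \<in> E\<^sup>+)}"
    using assms(1) \<open>j \<in> C\<close> by blast
next
  fix j assume "j \<in> {j \<in> {1..n}. i = j \<or> ((i, j) \<in> E\<^sup>+ \<and> (j, i) \<in> E\<^sup>+)}"
  then show "j \<in> C" using assms(2) closed by blast
next
  show "i \<in> {1..n}" using assms(1,2) by blast
qed

lemma p_adjacent_sym: "p_adjacent E a b \<longleftrightarrow> p_adjacent E b a"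
  unfolding p_adjacent_def common_child_def by blast

section \<open>Certificates yield SCCR graphs\<close>

locale sccr_data =
  fixes n :: nat and C :: "nat set" and A B ComCh NoComCh At :: "edge set"
  assumes C_sub: "C \<subseteq> {1..n}" and C_ne: "C \<noteq> {}"
    and A_sub: "A \<subseteq> C \<times> C" and A_sym: "\<forall>(a, b)\<in>A. (b, a) \<in> A"
    and A_irrefl: "\<forall>a. (a, a) \<notin> A"
    and B_sub: "B \<subseteq> ({1..n} - C) \<times> C"
    and ComCh_sub: "ComCh \<subseteq> ({1..n} - C) \<times> ({1..n} - C)"
    and NoComCh_sub: "NoComCh \<subseteq> ({1..n} - C) \<times> ({1..n} - C)"
    and At_sub: "At \<subseteq> A"
    and At_one: "\<forall>(a, b)\<in>A. ((a, b) \<in> At \<longleftrightarrow> (b, a) \<notin> At)"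
begin

lemma finite_C: "finite C"
  using C_sub finite_subset by blast

lemma At_sub_C: "At \<subseteq> C \<times> C"
  using At_sub A_sub by blast

lemma finite_At: "finite At"
  using At_sub_C finite_C by (meson finite_SigmaI finite_subset)

lemma A_symD: "(a, b) \<in> A \<Longrightarrow> (b, a) \<in> A"
  using A_sym by blast

lemma A_in_C: "(a, b) \<in> A \<Longrightarrow> a \<in> C \<and> b \<in> C"
  using A_sub by blast

lemma B_in: "(a, b) \<in> B \<Longrightarrow> a \<notin> C \<and> b \<in> C \<and> a \<in> {1..n} \<and> b \<in> {1..n}"
  using B_sub C_sub by blast

lemma At_orients_A: "(a, b) \<in> A \<Longrightarrow> ((a, b) \<in> At \<and> (b, a) \<notin> At) \<or> ((b, a) \<in> At \<and> (a, b) \<notin> At)"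
  using At_one by blast

lemma At_asym: "(a, b) \<in> At \<Longrightarrow> (b, a) \<notin> At"
  using At_one At_sub by blast

lemma AB_in_range: "(a, b) \<in> A \<union> B \<Longrightarrow> a \<in> {1..n} \<and> b \<in> {1..n}"
  using A_in_C B_in C_sub by blast

lemma AB_neq: "(a, b) \<in> A \<union> B \<Longrightarrow> a \<noteq> b"
  using A_irrefl B_in by blast

lemma AB_head: "(a, b) \<in> A \<union> B \<Longrightarrow> b \<in> C"
  using A_in_C B_in by blast

definition certificate :: "edge set \<Rightarrow> (edge \<Rightarrow> real) \<Rightarrow> bool" where
  "certificate Y x \<longleftrightarrow> Y \<subseteq> At \<union> B \<and> removable C A B ComCh NoComCh Y \<and>
     is_vertex (polyF_box C At Y) x \<and>
     (\<forall>a b c. a \<in> {1..n} \<and> b \<in> {1..n} \<and> c \<in> {1..n} \<and> a \<noteq> c \<and>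
        admissible C A B Y a b c \<and> (a, c) \<notin> A \<union> B \<longrightarrow>
        wdot (At - Y) (weight a b c) x < wmax (At - Y) (weight a b c)) \<and>
     (\<forall>(a, c)\<in>Y. \<exists>b\<in>C. admissible C A B Y a b c \<and>
        wdot (At - Y) (weight a b c) x = wmax (At - Y) (weight a b c))"

lemma Etilde_YJ_sub: "Etilde_YJ At B Y (Jx At Y x) \<subseteq> {1..n} \<times> {1..n}"
  unfolding Etilde_YJ_def Jx_def using At_sub A_sub B_sub C_sub A_symD by blast

lemma Etilde_YJ_antisym:
  "\<not> ((a, b) \<in> Etilde_YJ At B Y (Jx At Y x) \<and> (b, a) \<in> Etilde_YJ At B Y (Jx At Y x))"
  unfolding Etilde_YJ_def Jx_def using At_asym At_sub_C B_in by blast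

context
  fixes Y :: "edge set" and x :: "edge \<Rightarrow> real"
  assumes Y_sub: "Y \<subseteq> At \<union> B"
    and x_integral: "\<forall>e\<in>At - Y. x e = -1 \<or> x e = 0"
begin

abbreviation E_Yx :: "edge set" where
  "E_Yx \<equiv> Etilde_YJ At B Y (Jx At Y x)"

lemma mem_E_Yx:
  "(p, q) \<in> E_Yx \<longleftrightarrow> ((q, p) \<in> At - Y \<and> x (q, p) = -1) \<or> ((p, q) \<in> At - Y \<and> x (p, q) = 0) \<or> (p, q) \<in> B - Y"
proof -
  have "(p, q) \<in> At - Y \<Longrightarrow> x (p, q) \<noteq> -1 \<longleftrightarrow> x (p, q) = 0" using x_integral by force
  then show ?thesis unfolding Etilde_YJ_def Jx_def by auto
qed

lemma E_Yx_sub_AB: "(p, q) \<in> E_Yx \<Longrightarrow> (p, q) \<in> A \<union> B"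
  using mem_E_Yx At_sub A_symD by blast

lemma E_Yx_head: "(p, q) \<in> E_Yx \<Longrightarrow> q \<in> C"
  using E_Yx_sub_AB AB_head by blast

lemma E_Yx_trancl_head: "(p, q) \<in> E_Yx\<^sup>+ \<Longrightarrow> q \<in> C"
  by (induction rule: trancl_induct) (auto intro: E_Yx_head)

lemma E_Yx_tail_outside: "(p, q) \<in> E_Yx \<Longrightarrow> p \<notin> C \<Longrightarrow> (p, q) \<in> B - Y"
  using mem_E_Yx At_sub_C by blast

lemma E_Yx_avoids_Y:
  assumes "(p, q) \<in> E_Yx"
  shows "(p, q) \<notin> Y \<and> (q, p) \<notin> Y"
proof -
  consider "(q, p) \<in> At - Y" | "(p, q) \<in> At - Y" | "(p, q) \<in> B - Y"
    using mem_E_Yx assms by blast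
  then show ?thesis
    by cases (use At_asym At_sub_C B_in Y_sub in blast)+
qed

lemma E_Yx_orients_pair:
  assumes "(p, q) \<in> A \<union> B" "(p, q) \<notin> Y" "(q, p) \<notin> Y"
  shows "(p, q) \<in> E_Yx \<or> (q, p) \<in> E_Yx"
proof (cases "(p, q) \<in> A")
  case True
  then have "(p, q) \<in> At - Y \<or> (q, p) \<in> At - Y" using At_orients_A assms by blast
  then show ?thesis using x_integral mem_E_Yx[of p q] mem_E_Yx[of q p] by blast
next
  case False
  then show ?thesis using assms mem_E_Yx by blast
qed

lemma mem_E_Yx_iff_entries:
  assumes "(p, q) \<in> A \<union> B" "(p, q) \<notin> Y" "(q, p) \<notin> Y"
  shows "(p, q) \<in> E_Yx \<longleftrightarrow> ((q, p) \<in> At - Y \<longrightarrow> x (q, p) = -1) \<and> ((p, q) \<in> At - Y \<longrightarrow> x (p, q) = 0)"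
proof (cases "(p, q) \<in> A")
  case True
  then have "(p, q) \<notin> B" using A_in_C B_in by blast
  then show ?thesis
    using At_orients_A[OF True] mem_E_Yx[of p q] assms(2,3) by auto
next
  case False
  then have "(p, q) \<in> B - Y" "(p, q) \<notin> At" "(q, p) \<notin> At"
    using assms At_sub_C B_in by blast+
  then show ?thesis using mem_E_Yx by blast
qed

lemma wdot_eq_wmax_iff_common_child:
  assumes adm: "admissible C A B Y a b c" and "a \<noteq> c"
  shows "wdot (At - Y) (weight a b c) x = wmax (At - Y) (weight a b c) \<longleftrightarrow> (a, b) \<in> E_Yx \<and> (c, b) \<in> E_Yx"
proof -
  have ab: "(a, b) \<in> A \<union> B" "(a, b) \<notin> Y" "(b, a) \<notin> Y"
    and cb: "(c, b) \<in> A \<union> B" "(c, b) \<notin> Y" "(b, c) \<notin> Y"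
    using adm unfolding admissible_def by auto
  have "a \<noteq> b" "c \<noteq> b" using ab(1) cb(1) AB_neq by blast+
  then have entry: "weight a b c e * x e = max 0 (- weight a b c e) \<longleftrightarrow>
       ((e = (b, a) \<or> e = (b, c)) \<longrightarrow> x e = -1) \<and> ((e = (a, b) \<or> e = (c, b)) \<longrightarrow> x e = 0)"
    if "e \<in> At - Y" for e
    using x_integral that \<open>a \<noteq> c\<close> unfolding weight_def by auto
  have box: "\<forall>e\<in>At - Y. -1 \<le> x e \<and> x e \<le> 0" using x_integral by force
  have "wdot (At - Y) (weight a b c) x = wmax (At - Y) (weight a b c) \<longleftrightarrow>
      (\<forall>e\<in>At - Y. ((e = (b, a) \<or> e = (b, c)) \<longrightarrow> x e = -1) \<and> ((e = (a, b) \<or> e = (c, b)) \<longrightarrow> x e = 0))"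
    using wdot_eq_wmax_iff[OF _ box] finite_At entry by simp
  also have "\<dots> \<longleftrightarrow> (a, b) \<in> E_Yx \<and> (c, b) \<in> E_Yx"
    using mem_E_Yx_iff_entries[OF ab] mem_E_Yx_iff_entries[OF cb] by blast
  finally show ?thesis .
qed

lemma leaving_weight_ge_1_if_arc:
  assumes "(p, q) \<in> E_Yx" "p \<in> U" "q \<notin> U" "p \<in> C"
  shows "1 \<le> leaving_weight (At - Y) x U"
proof -
  have nonneg: "0 \<le> edge_leaving x U e" if "e \<in> At - Y" for e
    using x_integral that by (intro edge_leaving_nonneg) force+
  have "(p, q) \<notin> B" using assms(4) B_in by blast
  then obtain e where e: "e \<in> At - Y" "edge_leaving x U e = 1"
    using assms mem_E_Yx[of p q] by (auto simp: edge_leaving_def)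
  have "edge_leaving x U e \<le> leaving_weight (At - Y) x U"
    unfolding leaving_weight_def using finite_At nonneg e(1) by (intro member_le_sum) auto
  then show ?thesis using e(2) by simp
qed

end

context
  fixes Y :: "edge set" and x :: "edge \<Rightarrow> real"
  assumes Y_sub: "Y \<subseteq> At \<union> B"
    and x_integral: "\<forall>e\<in>At - Y. x e = -1 \<or> x e = 0"
    and x_cut: "\<forall>U. U \<subseteq> C \<and> U \<noteq> {} \<and> U \<noteq> C \<longrightarrow> 1 \<le> leaving_weight (At - Y) x U"
begin

lemma E_Yx_crosses_cut:
  assumes U: "U \<subseteq> C" "U \<noteq> {}" "U \<noteq> C"
  shows "\<exists>p\<in>U. \<exists>q\<in>C - U. (p, q) \<in> E_Yx Y x"
proof (rule ccontr)
  assume no_arc: "\<not> ?thesis"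
  have "edge_leaving x U e = 0" if e: "e \<in> At - Y" for e
  proof -
    obtain a b where ab: "e = (a, b)" by force
    then have "a \<in> C" "b \<in> C" using e At_sub_C by auto
    then have forward: "\<not> (a \<in> U \<and> b \<notin> U \<and> x e = 0)" and backward: "\<not> (b \<in> U \<and> a \<notin> U \<and> x e = -1)"
      using no_arc mem_E_Yx[OF Y_sub x_integral, of a b] mem_E_Yx[OF Y_sub x_integral, of b a] e ab
      by blast+
    have "x e = -1 \<or> x e = 0" using x_integral e by blast
    then consider "a \<in> U" "b \<notin> U" "x e = -1" | "b \<in> U" "a \<notin> U" "x e = 0" | "(a \<in> U) = (b \<in> U)"
      using forward backward by blast
    then show ?thesis by cases (simp_all add: edge_leaving_def ab)
  qed
  then have "leaving_weight (At - Y) x U = 0" by (simp add: leaving_weight_def)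
  moreover have "1 \<le> leaving_weight (At - Y) x U" using x_cut U by blast
  ultimately show False by simp
qed

lemma E_Yx_strongly_connected:
  assumes "a \<in> C" "b \<in> C"
  shows "(a, b) \<in> (E_Yx Y x)\<^sup>*"
proof (rule rtrancl_if_every_cut_crossed[OF _ assms])
  show "\<forall>U. U \<subseteq> C \<and> U \<noteq> {} \<and> U \<noteq> C \<longrightarrow> (\<exists>p\<in>U. \<exists>q\<in>C - U. (p, q) \<in> E_Yx Y x)"
    using E_Yx_crosses_cut by blast
qed

lemma is_SCC_E_Yx: "is_SCC n (E_Yx Y x) C"
proof -
  obtain i where "i \<in> C" using C_ne by blast
  moreover have "\<forall>a\<in>C. \<forall>b\<in>C. (a, b) \<in> (E_Yx Y x)\<^sup>*"
    using E_Yx_strongly_connected by blast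
  moreover have "\<forall>j. (i, j) \<in> (E_Yx Y x)\<^sup>+ \<longrightarrow> j \<in> C"
    using E_Yx_trancl_head[OF Y_sub x_integral] by blast
  ultimately show ?thesis by (rule is_SCC_if_strongly_connected_and_closed[OF C_sub])
qed

lemma E_Yx_no_unshielded_common_child:
  assumes strict: "\<forall>a b c. a \<in> {1..n} \<and> b \<in> {1..n} \<and> c \<in> {1..n} \<and> a \<noteq> c \<and>
              admissible C A B Y a b c \<and> (a, c) \<notin> A \<union> B \<longrightarrow>
              wdot (At - Y) (weight a b c) x < wmax (At - Y) (weight a b c)"
    and arcs: "(a, c) \<in> E_Yx Y x" "(b, c) \<in> E_Yx Y x" and path: "(c, b) \<in> (E_Yx Y x)\<^sup>*"
    and "a \<noteq> b" "a \<in> {1..n}" "b \<in> {1..n}" "(a, b) \<notin> A \<union> B"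
  shows False
proof -
  note E_facts = E_Yx_sub_AB[OF Y_sub x_integral] E_Yx_avoids_Y[OF Y_sub x_integral]
  have "c \<noteq> b" using E_facts(1)[OF arcs(2)] AB_neq by blast
  then have "b \<in> C" using path E_Yx_trancl_head[OF Y_sub x_integral] by (meson rtranclD)
  then have adm: "admissible C A B Y a c b"
    using E_facts[OF arcs(1)] E_facts[OF arcs(2)] unfolding admissible_def by blast
  have "c \<in> {1..n}" using E_facts(1)[OF arcs(1)] AB_in_range by blast
  then have "wdot (At - Y) (weight a c b) x < wmax (At - Y) (weight a c b)"
    using strict assms(5-8) adm by blast
  moreover have "wdot (At - Y) (weight a c b) x = wmax (At - Y) (weight a c b)"
    using wdot_eq_wmax_iff_common_child[OF Y_sub x_integral adm \<open>a \<noteq> b\<close>] arcs by blast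
  ultimately show False by simp
qed

lemma p_adjacent_E_Yx_if_pair:
  assumes tight: "\<forall>(a, c)\<in>Y. \<exists>b\<in>C. admissible C A B Y a b c \<and>
              wdot (At - Y) (weight a b c) x = wmax (At - Y) (weight a b c)"
    and "(p, q) \<in> A \<union> B"
  shows "p_adjacent (E_Yx Y x) p q"
proof -
  have removed_adjacent: "p_adjacent (E_Yx Y x) a c" if ac: "(a, c) \<in> Y" for a c
  proof -
    obtain b where b: "b \<in> C" "admissible C A B Y a b c"
      "wdot (At - Y) (weight a b c) x = wmax (At - Y) (weight a b c)"
      using bspec[OF tight ac] by auto
    have "(a, c) \<in> A \<union> B" using ac Y_sub At_sub by blast
    then have "a \<noteq> c" "c \<in> C" using AB_neq AB_head by blast+
    moreover have "(a, b) \<in> E_Yx Y x" "(c, b) \<in> E_Yx Y x"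
      using wdot_eq_wmax_iff_common_child[OF Y_sub x_integral b(2) \<open>a \<noteq> c\<close>] b(3) by blast+
    moreover have "(b, c) \<in> (E_Yx Y x)\<^sup>*" using E_Yx_strongly_connected b(1) \<open>c \<in> C\<close> by blast
    ultimately show ?thesis
      unfolding p_adjacent_def common_child_def ancestor_def by blast
  qed
  show ?thesis
  proof (cases "(p, q) \<in> Y \<or> (q, p) \<in> Y")
    case True
    then show ?thesis using removed_adjacent p_adjacent_sym by blast
  next
    case False
    then have "(p, q) \<in> E_Yx Y x \<or> (q, p) \<in> E_Yx Y x"
      using E_Yx_orients_pair[OF Y_sub x_integral assms(2)] by blast
    then show ?thesis using AB_neq[OF assms(2)] unfolding p_adjacent_def by blast
  qed
qed

lemma p_adjacent_E_Yx_iff: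
  assumes strict: "\<forall>a b c. a \<in> {1..n} \<and> b \<in> {1..n} \<and> c \<in> {1..n} \<and> a \<noteq> c \<and>
              admissible C A B Y a b c \<and> (a, c) \<notin> A \<union> B \<longrightarrow>
              wdot (At - Y) (weight a b c) x < wmax (At - Y) (weight a b c)"
    and tight: "\<forall>(a, c)\<in>Y. \<exists>b\<in>C. admissible C A B Y a b c \<and>
              wdot (At - Y) (weight a b c) x = wmax (At - Y) (weight a b c)"
    and ab: "a \<in> {1..n}" "b \<in> {1..n}" "a \<noteq> b"
  shows "p_adjacent (E_Yx Y x) a b \<longleftrightarrow> (a, b) \<in> A \<union> B \<or> (b, a) \<in> A \<union> B"
proof
  assume adj: "p_adjacent (E_Yx Y x) a b"
  show "(a, b) \<in> A \<union> B \<or> (b, a) \<in> A \<union> B"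
  proof (rule ccontr)
    assume not_adj: "\<not> ((a, b) \<in> A \<union> B \<or> (b, a) \<in> A \<union> B)"
    then have "(a, b) \<notin> E_Yx Y x" "(b, a) \<notin> E_Yx Y x"
      using E_Yx_sub_AB[OF Y_sub x_integral] by blast+
    then obtain c where arcs: "(a, c) \<in> E_Yx Y x" "(b, c) \<in> E_Yx Y x"
      and "(c, a) \<in> (E_Yx Y x)\<^sup>* \<or> (c, b) \<in> (E_Yx Y x)\<^sup>*"
      using adj unfolding p_adjacent_def common_child_def ancestor_def by blast
    then show False
      using E_Yx_no_unshielded_common_child[OF strict] ab not_adj by blast
  qed
next
  assume "(a, b) \<in> A \<union> B \<or> (b, a) \<in> A \<union> B"
  then show "p_adjacent (E_Yx Y x) a b"
    using p_adjacent_E_Yx_if_pair[OF tight] p_adjacent_sym by blast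
qed

lemma SCCR_E_Yx:
  assumes rem: "removable C A B ComCh NoComCh Y"
    and strict: "\<forall>a b c. a \<in> {1..n} \<and> b \<in> {1..n} \<and> c \<in> {1..n} \<and> a \<noteq> c \<and>
              admissible C A B Y a b c \<and> (a, c) \<notin> A \<union> B \<longrightarrow>
              wdot (At - Y) (weight a b c) x < wmax (At - Y) (weight a b c)"
    and tight: "\<forall>(a, c)\<in>Y. \<exists>b\<in>C. admissible C A B Y a b c \<and>
              wdot (At - Y) (weight a b c) x = wmax (At - Y) (weight a b c)"
  shows "SCCR n C A B ComCh NoComCh (E_Yx Y x)"
  unfolding SCCR_def
proof (intro conjI ballI impI)
  show "p_adjacent (E_Yx Y x) a b \<longleftrightarrow> (a, b) \<in> A \<union> B \<or> (b, a) \<in> A \<union> B"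
    if "a \<in> {1..n}" "b \<in> {1..n}" "a \<noteq> b" for a b
    using p_adjacent_E_Yx_iff[OF strict tight that] .
  show "is_SCC n (E_Yx Y x) C" by (rule is_SCC_E_Yx)
  show "(i, j) \<notin> (E_Yx Y x)\<^sup>+" if "j \<in> {1..n} - C" for i j
    using that E_Yx_trancl_head[OF Y_sub x_integral] by blast
  show "case p of (a, b) \<Rightarrow> \<exists>c\<in>C. common_child (E_Yx Y x) a b c" if p_in: "p \<in> ComCh" for p
  proof -
    obtain a b where p: "p = (a, b)" by force
    then obtain c where "c \<in> C" "(a, c) \<in> B - Y" "(b, c) \<in> B - Y"
      using rem p_in unfolding removable_def by blast
    then show ?thesis
      using p mem_E_Yx[OF Y_sub x_integral] unfolding common_child_def by blast
  qed
  show "case p of (a, b) \<Rightarrow> \<not> (\<exists>c\<in>C. common_child (E_Yx Y x) a b c)" if "p \<in> NoComCh" for p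
  proof -
    obtain a b where p: "p = (a, b)" by force
    then have "a \<notin> C" "b \<notin> C" using that NoComCh_sub by blast+
    then have "(a, c) \<in> B - Y \<and> (b, c) \<in> B - Y" if "common_child (E_Yx Y x) a b c" for c
      using that E_Yx_tail_outside[OF Y_sub x_integral] unfolding common_child_def by blast
    then show ?thesis using rem \<open>p \<in> NoComCh\<close> p unfolding removable_def by blast
  qed
qed

end

lemma certificate_imp_SCCR:
  assumes "certificate Y x"
  shows "SCCR n C A B ComCh NoComCh (Etilde_YJ At B Y (Jx At Y x))"
proof -
  have Y_sub: "Y \<subseteq> At \<union> B" and rem: "removable C A B ComCh NoComCh Y"
    and vertex: "is_vertex (polyF_box C At Y) x"
    and strict: "\<forall>a b c. a \<in> {1..n} \<and> b \<in> {1..n} \<and> c \<in> {1..n} \<and> a \<noteq> c \<and>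
              admissible C A B Y a b c \<and> (a, c) \<notin> A \<union> B \<longrightarrow>
              wdot (At - Y) (weight a b c) x < wmax (At - Y) (weight a b c)"
    and tight: "\<forall>(a, c)\<in>Y. \<exists>b\<in>C. admissible C A B Y a b c \<and>
              wdot (At - Y) (weight a b c) x = wmax (At - Y) (weight a b c)"
    using assms unfolding certificate_def by blast+
  have "finite (At - Y)" using finite_At by simp
  then have vertex': "is_vertex (strong_orientation_polytope C (At - Y)) x"
    using vertex by (simp add: polyF_box_eq_strong_orientation_polytope)
  have "At - Y \<subseteq> C \<times> C" using At_sub_C by blast
  then have integral: "\<forall>e\<in>At - Y. x e = -1 \<or> x e = 0"
    using vertex_of_strong_orientation_polytope_integral[OF finite_C _ vertex'] by blast
  have "\<forall>U. U \<subseteq> C \<and> U \<noteq> {} \<and> U \<noteq> C \<longrightarrow> 1 \<le> leaving_weight (At - Y) x U"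
    using vertex' unfolding is_vertex_def strong_orientation_polytope_def by blast
  from SCCR_E_Yx[OF Y_sub integral this rem strict tight] show ?thesis .
qed

section \<open>SCCR graphs yield certificates\<close>

definition unoriented_pairs :: "edge set \<Rightarrow> edge set" where
  "unoriented_pairs E = {e \<in> At \<union> B. e \<notin> E \<and> (snd e, fst e) \<notin> E}"

definition orientation_vector :: "edge set \<Rightarrow> edge \<Rightarrow> real" where
  "orientation_vector E e = (if e \<in> At - unoriented_pairs E \<and> (snd e, fst e) \<in> E then -1 else 0)"

context
  fixes E :: "edge set"
  assumes E_sub: "E \<subseteq> {1..n} \<times> {1..n}" and E_SCCR: "SCCR n C A B ComCh NoComCh E"
    and E_antisym: "\<forall>a\<in>{1..n}. \<forall>b\<in>{1..n}. a \<noteq> b \<longrightarrow> \<not> ((a, b) \<in> E \<and> (b, a) \<in> E)"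
begin

lemma E_p_adjacent_iff:
  "a \<in> {1..n} \<Longrightarrow> b \<in> {1..n} \<Longrightarrow> a \<noteq> b \<Longrightarrow> p_adjacent E a b \<longleftrightarrow> (a, b) \<in> A \<union> B \<or> (b, a) \<in> A \<union> B"
  using E_SCCR unfolding SCCR_def by blast

lemma E_no_path_out: "i \<in> C \<Longrightarrow> j \<in> {1..n} \<Longrightarrow> j \<notin> C \<Longrightarrow> (i, j) \<notin> E\<^sup>+"
  using E_SCCR unfolding SCCR_def by blast

lemma E_sub_AB:
  assumes "(p, q) \<in> E" "p \<noteq> q"
  shows "(p, q) \<in> A \<union> B"
proof -
  have range: "p \<in> {1..n}" "q \<in> {1..n}" using assms E_sub by auto
  moreover have "p_adjacent E p q" using assms unfolding p_adjacent_def by blast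
  ultimately have pair: "(p, q) \<in> A \<union> B \<or> (q, p) \<in> A \<union> B"
    using E_p_adjacent_iff assms(2) by blast
  have "q \<in> C"
  proof (rule ccontr)
    assume "q \<notin> C"
    then have "p \<in> C" using pair A_in_C B_in by blast
    then show False using E_no_path_out range \<open>q \<notin> C\<close> assms(1) by blast
  qed
  then show ?thesis using pair A_symD B_in by blast
qed

lemma E_head: "(p, q) \<in> E \<Longrightarrow> p \<noteq> q \<Longrightarrow> q \<in> C"
  using E_sub_AB AB_head by blast

lemma E_no_reverse_B: "(a, b) \<in> B \<Longrightarrow> (b, a) \<notin> E"
  using E_no_path_out B_in by blast

lemma E_strongly_connected:
  assumes "a \<in> C" "b \<in> C"
  shows "(a, b) \<in> E\<^sup>*"
proof -
  obtain i where "C = {j \<in> {1..n}. i = j \<or> ((i, j) \<in> E\<^sup>+ \<and> (j, i) \<in> E\<^sup>+)}"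
    using E_SCCR unfolding SCCR_def is_SCC_def by blast
  then have "(a, i) \<in> E\<^sup>*" "(i, b) \<in> E\<^sup>*" using assms by (auto intro: trancl_into_rtrancl)
  then show ?thesis by (rule rtrancl_trans)
qed

abbreviation Y_E :: "edge set" where
  "Y_E \<equiv> unoriented_pairs E"

abbreviation x_E :: "edge \<Rightarrow> real" where
  "x_E \<equiv> orientation_vector E"

lemma Y_E_sub: "Y_E \<subseteq> At \<union> B"
  unfolding unoriented_pairs_def by blast

lemma x_E_integral: "\<forall>e\<in>At - Y_E. x_E e = -1 \<or> x_E e = 0"
  unfolding orientation_vector_def by auto

lemma oriented_unless_unoriented: "(p, q) \<in> At \<union> B \<Longrightarrow> (p, q) \<notin> Y_E \<Longrightarrow> (p, q) \<in> E \<or> (q, p) \<in> E"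
  unfolding unoriented_pairs_def by auto

lemma E_arc_oriented: "(p, q) \<in> E \<Longrightarrow> (p, q) \<notin> Y_E \<and> (q, p) \<notin> Y_E"
  unfolding unoriented_pairs_def by auto

lemma E_eq_E_Yx:
  assumes pq: "(p, q) \<in> A \<union> B" and "(p, q) \<notin> Y_E" "(q, p) \<notin> Y_E"
  shows "(p, q) \<in> E \<longleftrightarrow> (p, q) \<in> E_Yx Y_E x_E"
proof -
  have "p \<in> {1..n}" "q \<in> {1..n}" "p \<noteq> q" using pq AB_in_range AB_neq by blast+
  then have not_both: "\<not> ((p, q) \<in> E \<and> (q, p) \<in> E)" using E_antisym by blast
  show ?thesis
  proof (cases "(p, q) \<in> A")
    case True
    then have "(p, q) \<in> E \<or> (q, p) \<in> E"
      using At_orients_A oriented_unless_unoriented assms(2,3) by blast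
    then have one_of: "(p, q) \<in> E \<longleftrightarrow> (q, p) \<notin> E" using not_both by blast
    note entries = mem_E_Yx_iff_entries[OF Y_E_sub x_E_integral assms]
    consider "(p, q) \<in> At" "(q, p) \<notin> At" | "(q, p) \<in> At" "(p, q) \<notin> At"
      using At_orients_A[OF True] by blast
    then show ?thesis
    proof cases
      case 1
      then have "x_E (p, q) = 0 \<longleftrightarrow> (q, p) \<notin> E" using assms(2) by (simp add: orientation_vector_def)
      then show ?thesis using 1 assms(2) one_of entries by auto
    next
      case 2
      then have "x_E (q, p) = -1 \<longleftrightarrow> (p, q) \<in> E" using assms(3) by (simp add: orientation_vector_def)
      then show ?thesis using 2 assms(3) entries by auto
    qed
  next
    case False
    then have "(p, q) \<in> B" "(p, q) \<notin> At" "(q, p) \<notin> At" using pq At_sub_C B_in by blast+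
    moreover have "(p, q) \<in> E"
      using oriented_unless_unoriented assms(2) E_no_reverse_B calculation(1) by blast
    ultimately show ?thesis
      using mem_E_Yx_iff_entries[OF Y_E_sub x_E_integral assms] by blast
  qed
qed

text \<open>A pair that E leaves unoriented is still p-adjacent, so its ends have a common child.\<close>
lemma unoriented_pair_common_child:
  assumes ac: "(a, c) \<in> Y_E"
  shows "\<exists>b\<in>C. admissible C A B Y_E a b c \<and> (a, b) \<in> E \<and> (c, b) \<in> E"
proof -
  have "(a, c) \<in> A \<union> B" and not_E: "(a, c) \<notin> E" "(c, a) \<notin> E"
    using ac At_sub unfolding unoriented_pairs_def by auto
  then have "a \<in> {1..n}" "c \<in> {1..n}" "a \<noteq> c" "c \<in> C"
    using AB_in_range AB_neq AB_head by blast+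
  then have "p_adjacent E a c" using E_p_adjacent_iff \<open>(a, c) \<in> A \<union> B\<close> by blast
  then obtain b where arcs: "(a, b) \<in> E" "(c, b) \<in> E"
    using not_E unfolding p_adjacent_def common_child_def by blast
  then have "a \<noteq> b" "c \<noteq> b" using not_E by blast+
  then have "b \<in> C" "admissible C A B Y_E a b c"
    using arcs \<open>c \<in> C\<close> E_head E_sub_AB E_arc_oriented unfolding admissible_def by blast+
  then show ?thesis using arcs by blast
qed

lemma removable_Y_E: "removable C A B ComCh NoComCh Y_E"
  unfolding removable_def
proof (intro conjI ballI)
  show "case p of (a, c) \<Rightarrow> \<exists>b\<in>C. (a, b) \<in> B - Y_E \<and> (c, b) \<in> B - Y_E" if p_in: "p \<in> ComCh" for p
  proof -
    obtain a c where p: "p = (a, c)" by force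
    then obtain b where "b \<in> C" and arcs: "(a, b) \<in> E" "(c, b) \<in> E"
      using E_SCCR p_in unfolding SCCR_def common_child_def by blast
    moreover have "a \<notin> C" "c \<notin> C" using p p_in ComCh_sub by blast+
    ultimately have "(a, b) \<in> B" "(c, b) \<in> B"
      using E_sub_AB A_in_C by (metis UnE)+
    then show ?thesis using p \<open>b \<in> C\<close> arcs E_arc_oriented by blast
  qed
  show "case p of (a, c) \<Rightarrow> \<not> (\<exists>b\<in>C. (a, b) \<in> B - Y_E \<and> (c, b) \<in> B - Y_E)" if p_in: "p \<in> NoComCh" for p
  proof -
    obtain a c where p: "p = (a, c)" by force
    have "\<not> common_child E a c b" if "b \<in> C" for b
      using E_SCCR p_in p that unfolding SCCR_def by blast
    moreover have "(a, b) \<in> E" if "(a, b) \<in> B - Y_E" for a b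
      using that oriented_unless_unoriented E_no_reverse_B by blast
    ultimately show ?thesis using p unfolding common_child_def by blast
  qed
  show "case p of (a, c) \<Rightarrow> \<exists>b\<in>C. (a, b) \<in> A \<union> B \<and> (c, b) \<in> A \<union> B \<and>
      Y_E \<inter> {(a, b), (b, a), (c, b), (b, c)} = {}" if "p \<in> Y_E" for p
    using that unoriented_pair_common_child unfolding admissible_def by fast
qed

lemma x_E_vertex: "is_vertex (polyF_box C At Y_E) x_E"
proof -
  have finite: "finite (At - Y_E)" using finite_At by simp
  have cut: "1 \<le> leaving_weight (At - Y_E) x_E U" if U: "U \<subseteq> C" "U \<noteq> {}" "U \<noteq> C" for U
  proof -
    obtain i j where i: "i \<in> U" and j: "j \<in> C" "j \<notin> U" using U by blast
    then have "(i, j) \<in> E\<^sup>*" using E_strongly_connected U(1) by blast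
    from rtrancl_leaves_set[OF this i j(2)] obtain p q where pq: "(p, q) \<in> E" "p \<in> U" "q \<notin> U"
      by blast
    then have "p \<noteq> q" by blast
    have "(p, q) \<in> A \<union> B" using E_sub_AB[OF pq(1) \<open>p \<noteq> q\<close>] .
    moreover have "(p, q) \<notin> Y_E" "(q, p) \<notin> Y_E" using E_arc_oriented[OF pq(1)] by blast+
    ultimately have "(p, q) \<in> E_Yx Y_E x_E" using E_eq_E_Yx pq(1) by blast
    moreover have "p \<in> C" using pq(2) U(1) by blast
    ultimately show ?thesis
      using leaving_weight_ge_1_if_arc[OF Y_E_sub x_E_integral] pq(2,3) by blast
  qed
  have "\<forall>e. e \<notin> At - Y_E \<longrightarrow> x_E e = 0" by (simp add: orientation_vector_def)
  moreover have "\<forall>e\<in>At - Y_E. -1 \<le> x_E e \<and> x_E e \<le> 0" using x_E_integral by force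
  ultimately have "x_E \<in> strong_orientation_polytope C (At - Y_E)"
    unfolding strong_orientation_polytope_def using cut by blast
  then show ?thesis
    unfolding polyF_box_eq_strong_orientation_polytope[OF finite]
  proof (rule integral_point_is_vertex)
    show "y e = 0" if "y \<in> strong_orientation_polytope C (At - Y_E)" "e \<notin> At - Y_E" for y e
      using that unfolding strong_orientation_polytope_def by blast
    show "-1 \<le> y e \<and> y e \<le> 0" if "y \<in> strong_orientation_polytope C (At - Y_E)" "e \<in> At - Y_E" for y e
      using that unfolding strong_orientation_polytope_def by blast
    show "x_E e = -1 \<or> x_E e = 0" if "e \<in> At - Y_E" for e
      using that x_E_integral by blast
  qed
qed

lemma x_E_strict:
  assumes "a \<in> {1..n}" "c \<in> {1..n}" "a \<noteq> c" and adm: "admissible C A B Y_E a b c"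
    and "(a, c) \<notin> A \<union> B"
  shows "wdot (At - Y_E) (weight a b c) x_E < wmax (At - Y_E) (weight a b c)"
proof -
  have "wdot (At - Y_E) (weight a b c) x_E \<noteq> wmax (At - Y_E) (weight a b c)"
  proof
    assume "wdot (At - Y_E) (weight a b c) x_E = wmax (At - Y_E) (weight a b c)"
    then have "(a, b) \<in> E_Yx Y_E x_E" "(c, b) \<in> E_Yx Y_E x_E"
      using wdot_eq_wmax_iff_common_child[OF Y_E_sub x_E_integral adm \<open>a \<noteq> c\<close>] by blast+
    moreover have ab: "(a, b) \<in> A \<union> B" "(a, b) \<notin> Y_E" "(b, a) \<notin> Y_E"
      and cb: "(c, b) \<in> A \<union> B" "(c, b) \<notin> Y_E" "(b, c) \<notin> Y_E" and "c \<in> C"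
      using adm unfolding admissible_def by auto
    ultimately have "(a, b) \<in> E" "(c, b) \<in> E" using E_eq_E_Yx by blast+
    moreover have "(b, c) \<in> E\<^sup>*" using E_strongly_connected AB_head[OF cb(1)] \<open>c \<in> C\<close> by blast
    ultimately have "p_adjacent E a c"
      using \<open>a \<noteq> c\<close> unfolding p_adjacent_def common_child_def ancestor_def by blast
    then have "(a, c) \<in> A \<union> B \<or> (c, a) \<in> A \<union> B" using E_p_adjacent_iff assms(1-3) by blast
    then show False using assms(5) \<open>c \<in> C\<close> A_symD B_in by blast
  qed
  moreover have "\<forall>e\<in>At - Y_E. -1 \<le> x_E e \<and> x_E e \<le> 0" using x_E_integral by force
  ultimately show ?thesis using wdot_le_wmax finite_At by (simp add: order.strict_iff_order)
qed

lemma x_E_tight: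
  assumes "(a, c) \<in> Y_E"
  shows "\<exists>b\<in>C. admissible C A B Y_E a b c \<and>
    wdot (At - Y_E) (weight a b c) x_E = wmax (At - Y_E) (weight a b c)"
proof -
  obtain b where b: "b \<in> C" "admissible C A B Y_E a b c" "(a, b) \<in> E" "(c, b) \<in> E"
    using unoriented_pair_common_child[OF assms] by blast
  have "a \<noteq> c" using assms Y_E_sub At_sub AB_neq by blast
  have "(a, b) \<in> E_Yx Y_E x_E" "(c, b) \<in> E_Yx Y_E x_E"
    using b(2-4) E_eq_E_Yx unfolding admissible_def by blast+
  then show ?thesis
    using b(1,2) wdot_eq_wmax_iff_common_child[OF Y_E_sub x_E_integral b(2) \<open>a \<noteq> c\<close>] by blast
qed

lemma certificate_Y_E_x_E: "certificate Y_E x_E"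
  unfolding certificate_def
proof (intro conjI allI impI ballI Y_E_sub removable_Y_E x_E_vertex)
  show "wdot (At - Y_E) (weight a b c) x_E < wmax (At - Y_E) (weight a b c)"
    if "a \<in> {1..n} \<and> b \<in> {1..n} \<and> c \<in> {1..n} \<and> a \<noteq> c \<and>
      admissible C A B Y_E a b c \<and> (a, c) \<notin> A \<union> B" for a b c
    using that x_E_strict by blast
  show "case p of (a, c) \<Rightarrow> \<exists>b\<in>C. admissible C A B Y_E a b c \<and>
      wdot (At - Y_E) (weight a b c) x_E = wmax (At - Y_E) (weight a b c)" if "p \<in> Y_E" for p
    using that x_E_tight by (cases p) simp
qed

end

lemma SCCR_orientation_exists_iff_certificate:
  "(\<exists>E. E \<subseteq> {1..n} \<times> {1..n} \<and> SCCR n C A B ComCh NoComCh E \<and>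
      (\<forall>a\<in>{1..n}. \<forall>b\<in>{1..n}. a \<noteq> b \<longrightarrow> \<not> ((a, b) \<in> E \<and> (b, a) \<in> E)))
    \<longleftrightarrow> (\<exists>Y x. certificate Y x)"
proof
  assume "\<exists>E. E \<subseteq> {1..n} \<times> {1..n} \<and> SCCR n C A B ComCh NoComCh E \<and>
      (\<forall>a\<in>{1..n}. \<forall>b\<in>{1..n}. a \<noteq> b \<longrightarrow> \<not> ((a, b) \<in> E \<and> (b, a) \<in> E))"
  then obtain E where "E \<subseteq> {1..n} \<times> {1..n}" "SCCR n C A B ComCh NoComCh E"
    "\<forall>a\<in>{1..n}. \<forall>b\<in>{1..n}. a \<noteq> b \<longrightarrow> \<not> ((a, b) \<in> E \<and> (b, a) \<in> E)" by blast
  from certificate_Y_E_x_E[OF this] show "\<exists>Y x. certificate Y x" by blast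
next
  assume "\<exists>Y x. certificate Y x"
  then obtain Y x where "certificate Y x" by blast
  from certificate_imp_SCCR[OF this]
  show "\<exists>E. E \<subseteq> {1..n} \<times> {1..n} \<and> SCCR n C A B ComCh NoComCh E \<and>
      (\<forall>a\<in>{1..n}. \<forall>b\<in>{1..n}. a \<noteq> b \<longrightarrow> \<not> ((a, b) \<in> E \<and> (b, a) \<in> E))"
    by (intro exI[of _ "Etilde_YJ At B Y (Jx At Y x)"] conjI ballI impI Etilde_YJ_sub Etilde_YJ_antisym)
qed

end

theorem theorem4p16:
  fixes n :: nat and C :: "nat set" and A B ComCh NoComCh At :: "edge set"
  assumes C_sub: "C \<subseteq> {1..n}" and C_ne: "C \<noteq> {}"
    and A_sub: "A \<subseteq> C \<times> C" and A_sym: "\<forall>(a, b)\<in>A. (b, a) \<in> A"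
    and A_irrefl: "\<forall>a. (a, a) \<notin> A"
    and B_sub: "B \<subseteq> ({1..n} - C) \<times> C"
    and ComCh_sub: "ComCh \<subseteq> ({1..n} - C) \<times> ({1..n} - C)"
    and NoComCh_sub: "NoComCh \<subseteq> ({1..n} - C) \<times> ({1..n} - C)"
    and At_sub: "At \<subseteq> A"
    and At_one: "\<forall>(a, b)\<in>A. ((a, b) \<in> At \<longleftrightarrow> (b, a) \<notin> At)"
  shows
    "((\<exists>E. E \<subseteq> {1..n} \<times> {1..n} \<and> SCCR n C A B ComCh NoComCh E \<and>
          (\<forall>a\<in>{1..n}. \<forall>b\<in>{1..n}. a \<noteq> b \<longrightarrow> \<not> ((a, b) \<in> E \<and> (b, a) \<in> E)))
      \<longleftrightarrow>
      (\<exists>Y x. Y \<subseteq> At \<union> B \<and> removable C A B ComCh NoComCh Y \<and>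
          is_vertex (polyF_box C At Y) x \<and>
          (\<forall>a b c. a \<in> {1..n} \<and> b \<in> {1..n} \<and> c \<in> {1..n} \<and> a \<noteq> c \<and>
              admissible C A B Y a b c \<and> (a, c) \<notin> A \<union> B \<longrightarrow>
              wdot (At - Y) (weight a b c) x < wmax (At - Y) (weight a b c)) \<and>
          (\<forall>(a, c)\<in>Y. \<exists>b\<in>C. admissible C A B Y a b c \<and>
              wdot (At - Y) (weight a b c) x = wmax (At - Y) (weight a b c))))
    \<and>
    (\<forall>Y x. Y \<subseteq> At \<union> B \<and> removable C A B ComCh NoComCh Y \<and>
          is_vertex (polyF_box C At Y) x \<and>
          (\<forall>a b c. a \<in> {1..n} \<and> b \<in> {1..n} \<and> c \<in> {1..n} \<and> a \<noteq> c \<and>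
              admissible C A B Y a b c \<and> (a, c) \<notin> A \<union> B \<longrightarrow>
              wdot (At - Y) (weight a b c) x < wmax (At - Y) (weight a b c)) \<and>
          (\<forall>(a, c)\<in>Y. \<exists>b\<in>C. admissible C A B Y a b c \<and>
              wdot (At - Y) (weight a b c) x = wmax (At - Y) (weight a b c))
      \<longrightarrow> SCCR n C A B ComCh NoComCh (Etilde_YJ At B Y (Jx At Y x)))"
proof -
  interpret sccr_data n C A B ComCh NoComCh At
    using assms by unfold_locales
  have "\<forall>Y x. certificate Y x \<longrightarrow> SCCR n C A B ComCh NoComCh (Etilde_YJ At B Y (Jx At Y x))"
    using certificate_imp_SCCR by blast
  with SCCR_orientation_exists_iff_certificate show ?thesis
    unfolding certificate_def by (rule conjI)
qed

end
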